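(* Let $X$ be the Cantor set, $\alpha$ a minimal homeomorphism of $X$, and $\phi:X\to\operatorname{Isom}(\mathbb{T})$ continuous such that $\alpha\times\phi$ is minimal and not orientation preserving. For any $x_0\in X$, $m\in\mathbb{Z}$ and nonempty clopen $O\subset X$, there exists a clopen set $U\subset O$ such that $1_U$ is equivalent to $mh_\phi$ in $K_1(A_{x_0})$. Moreover, there exists $\sigma\in[[\alpha]]$ such that $\sigma(x)=x$ for all $x\notin U$ and $\sigma_\phi^*(1_U)=-1_U$.
   Context: $\alpha\times\phi:(x,t)\mapsto(\alpha(x),\phi_x(t))$; $o(\phi)(x)=0$ if $\phi_x$ preserves orientation, $1$ otherwise; orientation preserving means $o(\phi)\in\{f-f\circ\alpha^{-1}:f\in C(X,\mathbb{Z}_2)\}$. $\alpha_\phi^*$ is the automorphism of $C(X,\mathbb{Z})$ given by $\alpha_\phi^*(f)(x)=(-1)^{o(\phi)(\alpha^{-1}(x))}f(\alpha^{-1}(x))$. $K_1(A_{x_0})$ is identified with $C(X,\mathbb{Z})/\{f-\alpha_\phi^*(f):f\in C(X,\mathbb{Z}),f(x_0)=0\}$ (where $A_{x_0}$ is the subalgebra of the crossed product generated by $C(X\times\mathbb{T})$ and $uC_0((X\setminus\{x_0\})\times\mathbb{T})$), and "equivalent in $K_1(A_{x_0})$" means equal images in this quotient. $h_\phi(x)=1$ if $o(\phi)(\alpha^{-1}(x))=1$, $0$ otherwise. $[[\alpha]]$ (topological full group) is the set of homeomorphisms $\sigma$ of $X$ for which there is a continuous $n:X\to\mathbb{Z}$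 with $\sigma(x)=\alpha^{n(x)}(x)$; for such $\sigma$, $\sigma_\phi^*(f)=\sum_{k\in\mathbb{Z}}(\alpha_\phi^* )^k(f1_{n^{-1}(k)})$ for $f\in C(X,\mathbb{Z})$. *)

theory Defs
  imports "HOL-Analysis.Analysis"
begin

definition Cantor :: "(nat \<Rightarrow> bool) topology" where
  "Cantor = product_topology (\<lambda>_. discrete_topology (UNIV :: bool set)) UNIV"

type_synonym cantor = "nat \<Rightarrow> bool"

definition Circ :: "complex set" where
  "Circ = sphere 0 1"

text \<open>Isometries of the circle (onto isometries of T; only values on T matter).\<close>
definition circle_isom :: "(complex \<Rightarrow> complex) \<Rightarrow> bool" where
  "circle_isom f \<longleftrightarrow> f ` Circ = Circ \<and> (\<forall>z\<in>Circ. \<forall>w\<in>Circ. dist (f z) (f w) = dist z w)"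

text \<open>An isometry of T preserves orientation iff it is a rotation.\<close>
definition preserves_orientation :: "(complex \<Rightarrow> complex) \<Rightarrow> bool" where
  "preserves_orientation f \<longleftrightarrow> (\<exists>c. \<forall>z\<in>Circ. f z = c * z)"

definition zpow :: "('a \<Rightarrow> 'a) \<Rightarrow> ('a \<Rightarrow> 'a) \<Rightarrow> int \<Rightarrow> 'a \<Rightarrow> 'a" where
  "zpow f g n = (if 0 \<le> n then f ^^ nat n else g ^^ nat (- n))"

definition minimal_homeo :: "'a topology \<Rightarrow> ('a \<Rightarrow> 'a) \<Rightarrow> bool" where
  "minimal_homeo T f \<longleftrightarrow> homeomorphic_map T T f \<and>
     (\<forall>A. closedin T A \<and> f ` A = A \<longrightarrow> A = {} \<or> A = topspace T)"

definition skew :: "(cantor \<Rightarrow> cantor) \<Rightarrow> (cantor \<Rightarrow> complex \<Rightarrow> complex)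
    \<Rightarrow> cantor \<times> complex \<Rightarrow> cantor \<times> complex" where
  "skew \<alpha> \<phi> = (\<lambda>(x, t). (\<alpha> x, \<phi> x t))"

text \<open>o(phi)(x) : True stands for 1 in Z_2 (phi_x reverses orientation).\<close>
definition orient :: "(cantor \<Rightarrow> complex \<Rightarrow> complex) \<Rightarrow> cantor \<Rightarrow> bool" where
  "orient \<phi> x \<longleftrightarrow> \<not> preserves_orientation (\<phi> x)"

text \<open>alpha x phi orientation preserving: o(phi) = f - f o alpha^{-1} for some f in C(X,Z_2)
  (subtraction in Z_2 is exclusive or).\<close>
definition orientation_preserving ::
    "(cantor \<Rightarrow> cantor) \<Rightarrow> (cantor \<Rightarrow> complex \<Rightarrow> complex) \<Rightarrow> bool" where
  "orientation_preserving \<alpha> \<phi> \<longleftrightarrow>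
     (\<exists>f :: cantor \<Rightarrow> bool. continuous_map Cantor (discrete_topology UNIV) f \<and>
        (\<forall>x. orient \<phi> x \<longleftrightarrow> (f x \<noteq> f (inv \<alpha> x))))"

definition CZ :: "(cantor \<Rightarrow> int) set" where
  "CZ = {f. continuous_map Cantor euclidean f}"

definition astar :: "(cantor \<Rightarrow> cantor) \<Rightarrow> (cantor \<Rightarrow> complex \<Rightarrow> complex)
    \<Rightarrow> (cantor \<Rightarrow> int) \<Rightarrow> cantor \<Rightarrow> int" where
  "astar \<alpha> \<phi> f x = (if orient \<phi> (inv \<alpha> x) then -1 else 1) * f (inv \<alpha> x)"

definition astar_inv :: "(cantor \<Rightarrow> cantor) \<Rightarrow> (cantor \<Rightarrow> complex \<Rightarrow> complex)
    \<Rightarrow> (cantor \<Rightarrow> int) \<Rightarrow> cantor \<Rightarrow> int" where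
  "astar_inv \<alpha> \<phi> f x = (if orient \<phi> x then -1 else 1) * f (\<alpha> x)"

definition hphi :: "(cantor \<Rightarrow> cantor) \<Rightarrow> (cantor \<Rightarrow> complex \<Rightarrow> complex) \<Rightarrow> cantor \<Rightarrow> int" where
  "hphi \<alpha> \<phi> x = (if orient \<phi> (inv \<alpha> x) then 1 else 0)"

text \<open>Equality of images in K_1(A_{x0}) = C(X,Z) / {f - alpha_phi^* f : f in C(X,Z), f(x0)=0}.\<close>
definition K1_equiv :: "(cantor \<Rightarrow> cantor) \<Rightarrow> (cantor \<Rightarrow> complex \<Rightarrow> complex) \<Rightarrow> cantor
    \<Rightarrow> (cantor \<Rightarrow> int) \<Rightarrow> (cantor \<Rightarrow> int) \<Rightarrow> bool" where
  "K1_equiv \<alpha> \<phi> x0 g1 g2 \<longleftrightarrow>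
     (\<exists>f\<in>CZ. f x0 = 0 \<and> (\<forall>x. g1 x - g2 x = f x - astar \<alpha> \<phi> f x))"

definition full_group_cocycle :: "(cantor \<Rightarrow> cantor) \<Rightarrow> (cantor \<Rightarrow> cantor) \<Rightarrow> (cantor \<Rightarrow> int) \<Rightarrow> bool" where
  "full_group_cocycle \<alpha> \<sigma> n \<longleftrightarrow> homeomorphic_map Cantor Cantor \<sigma> \<and> n \<in> CZ \<and>
     (\<forall>x. \<sigma> x = zpow \<alpha> (inv \<alpha>) (n x) x)"

definition full_group :: "(cantor \<Rightarrow> cantor) \<Rightarrow> (cantor \<Rightarrow> cantor) set" where
  "full_group \<alpha> = {\<sigma>. \<exists>n. full_group_cocycle \<alpha> \<sigma> n}"

text \<open>sigma_phi^* f = sum_k (alpha_phi^*)^k (f 1_{n^{-1}(k)}); n has finite range (X compact).\<close>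
definition sstar :: "(cantor \<Rightarrow> cantor) \<Rightarrow> (cantor \<Rightarrow> complex \<Rightarrow> complex) \<Rightarrow> (cantor \<Rightarrow> int)
    \<Rightarrow> (cantor \<Rightarrow> int) \<Rightarrow> cantor \<Rightarrow> int" where
  "sstar \<alpha> \<phi> n f y = (\<Sum>k\<in>range n.
      zpow (astar \<alpha> \<phi>) (astar_inv \<alpha> \<phi>) k (\<lambda>x. f x * indicator (n -` {k}) x) y)"

end

theory Submission
  imports Defs
begin

text \<open>Since \<open>\<alpha> \<times> \<phi>\<close> is not orientation preserving, the orientation character \<open>o(\<phi>)\<close> is not a
  coboundary, so the two-point extension \<open>(x, b) \<mapsto> (\<alpha> x, b + o(\<phi>)(x))\<close> of \<open>\<alpha>\<close> is again
  minimal. Its orbits give, inside any nonempty clopen \<open>V\<close>, a point \<open>p\<close> whose orbit reaches \<open>x0\<close>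
  with a prescribed orientation sign \<open>s = \<plusminus>1\<close> and returns to \<open>V\<close> with sign \<open>-1\<close>. Shrinking \<open>V\<close>
  around \<open>p\<close> and keeping the points whose first return has sign \<open>-1\<close> yields a clopen \<open>U\<close> all of
  whose returns reverse orientation. The first-return map of \<open>U\<close> is an element \<open>\<sigma>\<close> of \<open>[[\<alpha>]]\<close>
  with \<open>\<sigma>\<^sup>*\<^sub>\<phi>(1\<^sub>U) = -1\<^sub>U\<close>, and the sign accumulated since the last visit to \<open>U\<close> is a transfer
  function showing \<open>1\<^sub>U \<sim> s h\<^sub>\<phi>\<close> in \<open>K\<^sub>1(A\<^sub>x\<^sub>0)\<close>. Disjoint unions of such sets add in
  \<open>K\<^sub>1\<close>, which produces every multiple \<open>m h\<^sub>\<phi>\<close>.\<close>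

definition clopenin :: "'a topology \<Rightarrow> 'a set \<Rightarrow> bool" where
  "clopenin X S \<longleftrightarrow> openin X S \<and> closedin X S"

lemma clopenin_empty [simp]: "clopenin X {}"
  and clopenin_topspace [simp]: "clopenin X (topspace X)"
  by (auto simp: clopenin_def)

lemma clopenin_Int: "clopenin X S \<Longrightarrow> clopenin X T \<Longrightarrow> clopenin X (S \<inter> T)"
  and clopenin_Un: "clopenin X S \<Longrightarrow> clopenin X T \<Longrightarrow> clopenin X (S \<union> T)"
  and clopenin_Diff: "clopenin X S \<Longrightarrow> clopenin X T \<Longrightarrow> clopenin X (S - T)"
  by (auto simp: clopenin_def openin_diff closedin_diff)

lemma clopenin_continuous_map_preimage:
  "continuous_map X Y f \<Longrightarrow> clopenin Y S \<Longrightarrow> clopenin X {x \<in> topspace X. f x \<in> S}"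
  by (simp add: clopenin_def openin_continuous_map_preimage closedin_continuous_map_preimage)

lemma continuous_map_bool_iff:
  "continuous_map X (discrete_topology UNIV) (g :: 'a \<Rightarrow> bool) \<longleftrightarrow> clopenin X {x \<in> topspace X. g x}"
proof
  assume "continuous_map X (discrete_topology UNIV) g"
  from clopenin_continuous_map_preimage[OF this, of "{True}"]
  show "clopenin X {x \<in> topspace X. g x}" by (simp add: clopenin_def)
next
  assume clopen: "clopenin X {x \<in> topspace X. g x}"
  have "openin X {x \<in> topspace X. g x \<in> B}" for B
  proof -
    have "g x \<in> B \<longleftrightarrow> (g x \<and> True \<in> B) \<or> (\<not> g x \<and> False \<in> B)" for x
      by (cases "g x") auto
    then have "{x \<in> topspace X. g x \<in> B} =
        (if True \<in> B then {x \<in> topspace X. g x} else {}) \<union>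
        (if False \<in> B then topspace X - {x \<in> topspace X. g x} else {})"
      by auto
    then show ?thesis
      using clopen by (simp add: clopenin_def openin_diff openin_Un)
  qed
  then show "continuous_map X (discrete_topology UNIV) g"
    by (simp add: continuous_map_def)
qed

subsection \<open>Locally constant integer-valued functions\<close>

lemma continuous_map_int_iff:
  "continuous_map X euclidean (f :: 'a \<Rightarrow> int) \<longleftrightarrow> (\<forall>k. openin X {x \<in> topspace X. f x = k})"
proof
  assume "continuous_map X euclidean f"
  then show "\<forall>k. openin X {x \<in> topspace X. f x = k}"
    using openin_continuous_map_preimage[of X euclidean f "{k}" for k] by (simp add: open_discrete)
next
  assume levels: "\<forall>k. openin X {x \<in> topspace X. f x = k}"
  have "openin X {x \<in> topspace X. f x \<in> B}" for B
  proof -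
    have "{x \<in> topspace X. f x \<in> B} = (\<Union>k\<in>B. {x \<in> topspace X. f x = k})"
      by auto
    then show ?thesis using levels by (auto intro: openin_Union)
  qed
  then show "continuous_map X euclidean f"
    by (simp add: continuous_map_def)
qed

lemma continuous_map_glue_levels:
  assumes "\<And>k. openin X {x \<in> topspace X. l x = k}" and "\<And>k. continuous_map X Y (H k)"
  shows "continuous_map X Y (\<lambda>x. H (l x) x)"
  unfolding continuous_map_def
proof (intro conjI allI impI)
  show "(\<lambda>x. H (l x) x) \<in> topspace X \<rightarrow> topspace Y"
    using assms(2) by (auto simp: continuous_map_def)
  fix V assume "openin Y V"
  have "{x \<in> topspace X. H (l x) x \<in> V} =
      (\<Union>k. {x \<in> topspace X. l x = k} \<inter> {x \<in> topspace X. H k x \<in> V})"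
    by auto
  also have "openin X \<dots>"
    using assms(1) openin_continuous_map_preimage[OF assms(2) \<open>openin Y V\<close>]
    by (intro openin_Union) (auto intro: openin_Int)
  finally show "openin X {x \<in> topspace X. H (l x) x \<in> V}" .
qed

lemma continuous_map_int_binop:
  assumes "continuous_map X euclidean (f :: 'a \<Rightarrow> int)" and "continuous_map X euclidean (g :: 'a \<Rightarrow> int)"
  shows "continuous_map X euclidean (\<lambda>x. F (f x) (g x) :: int)"
proof -
  have levels: "openin X {x \<in> topspace X. f x = k}" "openin X {x \<in> topspace X. g x = k}" for k
    using assms continuous_map_int_iff by blast+
  have "continuous_map X euclidean (\<lambda>x. F k (g x))" for k
    using continuous_map_glue_levels[where l = g and H = "\<lambda>l x. F k l", OF levels(2)] by simp
  then show ?thesis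
    using continuous_map_glue_levels[where l = f and H = "\<lambda>k x. F k (g x)", OF levels(1)] by simp
qed

lemma continuous_map_int_comp:
  "continuous_map X euclidean (f :: 'a \<Rightarrow> int) \<Longrightarrow> continuous_map X euclidean (\<lambda>x. G (f x) :: int)"
  using continuous_map_int_binop[of X f f "\<lambda>a b. G a"] by simp

lemma continuous_map_indicator_int:
  assumes "clopenin X S"
  shows "continuous_map X euclidean (\<lambda>x. indicator S x :: int)"
proof -
  have "{x \<in> topspace X. (indicator S x :: int) = k} =
      (if k = 1 then S else {}) \<union> (if k = 0 then topspace X - S else {})" for k
    using assms closedin_subset by (auto simp: indicator_def clopenin_def)
  then show ?thesis
    using assms by (simp add: continuous_map_int_iff clopenin_def openin_diff)
qed

lemma continuous_map_if_clopenin: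
  assumes "clopenin X S" and "continuous_map X Y g" and "continuous_map X Y h"
  shows "continuous_map X Y (\<lambda>x. if x \<in> S then g x else h x)"
proof -
  have levels: "openin X {x \<in> topspace X. (indicator S x :: int) = k}" for k
    using continuous_map_indicator_int[OF assms(1)] continuous_map_int_iff by blast
  have "continuous_map X Y (if k = 1 then g else h)" for k :: int
    using assms by simp
  from continuous_map_glue_levels[where H = "\<lambda>k. if k = 1 then g else h", OF levels this]
  have "continuous_map X Y (\<lambda>x. (if (indicator S x :: int) = 1 then g else h) x)" .
  moreover have "(\<lambda>x. (if (indicator S x :: int) = 1 then g else h) x) = (\<lambda>x. if x \<in> S then g x else h x)"
    by (auto simp: indicator_def)
  ultimately show ?thesis by simp
qed

lemma finite_compact_int: "compact (S :: int set) \<Longrightarrow> finite S"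
proof -
  assume "compact S"
  moreover have "S \<subseteq> \<Union>((\<lambda>k. {k}) ` S)" and "\<forall>B\<in>(\<lambda>k. {k}) ` S. open B"
    by (auto simp: open_discrete)
  ultimately obtain \<D> where \<D>: "\<D> \<subseteq> (\<lambda>k. {k}) ` S" "finite \<D>" "S \<subseteq> \<Union>\<D>"
    by (meson compactE)
  have "finite (\<Union>\<D>)"
    using \<D>(1,2) by (intro finite_Union) auto
  then show "finite S"
    using \<D>(3) finite_subset by blast
qed

lemma finite_image_continuous_map_int:
  assumes "compact_space X" and "continuous_map X euclidean (f :: 'a \<Rightarrow> int)"
  shows "finite (f ` topspace X)"
proof -
  have "compactin euclidean (f ` topspace X)"
    using assms image_compactin compact_space_def by blast
  then show ?thesis
    by (simp add: compactin_euclidean_iff finite_compact_int)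
qed

lemma topspace_Cantor [simp]: "topspace Cantor = UNIV"
  by (simp add: Cantor_def)

lemma compact_space_Cantor: "compact_space Cantor"
  by (simp add: Cantor_def compact_space_product_topology compact_space_discrete_topology)

lemma Hausdorff_space_Cantor: "Hausdorff_space Cantor"
  by (simp add: Cantor_def Hausdorff_space_product_topology)

lemma infinite_UNIV_cantor: "infinite (UNIV :: cantor set)"
proof
  assume "finite (UNIV :: cantor set)"
  then have "finite (range (\<lambda>n :: nat. \<lambda>m. m = n))"
    by (rule finite_subset[rotated]) simp
  moreover have "inj (\<lambda>n :: nat. \<lambda>m. m = n)"
    by (auto simp: inj_def fun_eq_iff)
  ultimately show False
    using finite_imageD by fastforce
qed

lemma clopenin_Cantor_cylinder: "clopenin Cantor {x. x n = b}"
proof -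
  have "continuous_map Cantor (discrete_topology UNIV) (\<lambda>x. x n)"
    unfolding Cantor_def by (rule continuous_map_product_projection) simp
  from clopenin_continuous_map_preimage[OF this, of "{b}"] show ?thesis
    by (simp add: clopenin_def)
qed

lemma Cantor_clopen_separating:
  assumes "p \<noteq> q"
  obtains C where "clopenin Cantor C" "p \<in> C" "q \<notin> C"
proof -
  obtain n where "p n \<noteq> q n" using assms by auto
  then show thesis using that[of "{x. x n = p n}"] by (simp add: clopenin_Cantor_cylinder)
qed

lemma Cantor_clopen_avoiding_finite:
  assumes "finite S" "p \<notin> S"
  obtains C where "clopenin Cantor C" "p \<in> C" "C \<inter> S = {}"
  using assms
proof (induction S arbitrary: thesis rule: finite_induct)
  case empty
  then show ?case using clopenin_topspace[of Cantor] by fastforce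
next
  case (insert q S)
  obtain C where C: "clopenin Cantor C" "p \<in> C" "C \<inter> S = {}"
    using insert by blast
  obtain D where D: "clopenin Cantor D" "p \<in> D" "q \<notin> D"
    using Cantor_clopen_separating[of p q] insert.prems by blast
  show ?case using C D insert.prems(1)[of "C \<inter> D"] by (auto simp: clopenin_Int)
qed

text \<open>A nonempty open set contains a basic cylinder, which leaves some coordinate free.\<close>
lemma Cantor_clopen_split:
  assumes "clopenin Cantor V" "V \<noteq> {}"
  obtains V1 V2 where "clopenin Cantor V1" "clopenin Cantor V2" "V1 \<noteq> {}" "V2 \<noteq> {}"
    "V1 \<inter> V2 = {}" "V1 \<union> V2 \<subseteq> V"
proof -
  obtain v where v: "v \<in> V" using assms(2) by auto
  have "openin (product_topology (\<lambda>_. discrete_topology (UNIV :: bool set)) UNIV) V"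
    using assms(1) by (simp add: clopenin_def Cantor_def)
  then obtain W where W: "finite {i. W i \<noteq> UNIV}" "v \<in> Pi\<^sub>E UNIV W" "Pi\<^sub>E UNIV W \<subseteq> V"
    using v unfolding openin_product_topology_alt by auto
  obtain i where i: "W i = UNIV"
    using ex_new_if_finite[OF infinite_UNIV_nat W(1)] by auto
  define v' where "v' = v(i := \<not> v i)"
  have "v' \<in> V" using W(2,3) i by (force simp: v'_def)
  have "v \<noteq> v'" by (auto simp: v'_def fun_eq_iff)
  then obtain C where C: "clopenin Cantor C" "v \<in> C" "v' \<notin> C"
    by (rule Cantor_clopen_separating)
  show thesis
    using that[of "V \<inter> C" "V - C"] assms(1) C v \<open>v' \<in> V\<close> by (auto simp: clopenin_Int clopenin_Diff)
qed

subsection \<open>Minimal homeomorphisms\<close>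

locale minimal_system =
  fixes X :: "'a topology" and T :: "'a \<Rightarrow> 'a"
  assumes minimal_homeo: "minimal_homeo X T" and topspace_UNIV: "topspace X = UNIV"
begin

lemma homeomorphic: "homeomorphic_map X X T"
  using minimal_homeo by (simp add: minimal_homeo_def)

lemma continuous: "continuous_map X X T"
  using homeomorphic homeomorphic_imp_continuous_map by blast

lemma bij: "bij T"
  using homeomorphic topspace_UNIV by (simp add: homeomorphic_eq_everything_map bij_def)

lemma inv_apply [simp]: "inv T (T x) = x"
  and apply_inv [simp]: "T (inv T x) = x"
  using bij by (simp_all add: bij_is_inj bij_is_surj surj_f_inv_f)

lemma homeomorphic_maps_inv: "homeomorphic_maps X X T (inv T)"
proof -
  obtain g where g: "homeomorphic_maps X X T g"
    using homeomorphic homeomorphic_map_maps by blast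
  then have "g = inv T"
    using topspace_UNIV by (metis homeomorphic_maps_def inv_apply UNIV_I ext)
  then show ?thesis using g by simp
qed

lemma continuous_inv: "continuous_map X X (inv T)"
  using homeomorphic_maps_inv by (simp add: homeomorphic_maps_def)

lemma continuous_funpow: "continuous_map X X (T ^^ n)"
  and continuous_inv_funpow: "continuous_map X X (inv T ^^ n)"
  by (induction n) (auto intro: continuous_map_compose continuous continuous_inv)

lemma homeomorphic_funpow: "homeomorphic_map X X (T ^^ n)"
proof (induction n)
  case (Suc n)
  then show ?case
    unfolding funpow.simps(2) by (rule homeomorphic_map_compose[OF _ homeomorphic])
qed (simp flip: id_def)

lemma invariant_closed_cases: "closedin X A \<Longrightarrow> T ` A = A \<Longrightarrow> A = {} \<or> A = UNIV"
  using minimal_homeo topspace_UNIV by (simp add: minimal_homeo_def)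

lemma minimal_system_inv: "minimal_system X (inv T)"
proof
  have "homeomorphic_maps X X (inv T) T"
    using homeomorphic_maps_inv homeomorphic_maps_sym by blast
  then have "homeomorphic_map X X (inv T)"
    using homeomorphic_map_maps by blast
  moreover have "A = {} \<or> A = topspace X" if "closedin X A" "inv T ` A = A" for A
  proof -
    have "T ` A = A"
      using \<open>inv T ` A = A\<close> by (metis (no_types, lifting) apply_inv image_cong image_image image_ident)
    then show ?thesis using invariant_closed_cases[OF that(1)] topspace_UNIV by simp
  qed
  ultimately show "minimal_homeo X (inv T)"
    by (simp add: minimal_homeo_def)
qed (rule topspace_UNIV)

text \<open>The intersection of the nest \<open>T\<^sup>n ` C\<close> is closed and invariant; by compactness it is
  empty only if some \<open>T\<^sup>n ` C\<close>, hence \<open>C\<close>, is empty.\<close>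
lemma forward_invariant_closed_cases:
  assumes "compact_space X" "closedin X C" "T ` C \<subseteq> C"
  shows "C = {} \<or> C = UNIV"
proof -
  define N where "N n = (T ^^ n) ` C" for n
  have closed_N: "closedin X (N n)" for n
    unfolding N_def using homeomorphic_imp_closed_map[OF homeomorphic_funpow] assms(2)
    by (simp add: closed_map_def)
  have dec: "decseq N"
    unfolding N_def using assms(3)
    by (intro decseq_SucI) (auto simp: funpow_Suc_right simp del: funpow.simps)
  define D where "D = (\<Inter>n. N n)"
  have "closedin X D"
    unfolding D_def using closed_N by blast
  moreover have "T ` D = D"
  proof -
    have "T ` D = (\<Inter>n. T ` N n)"
      unfolding D_def using bij_is_inj[OF bij] by (simp add: image_INT)
    also have "\<dots> = (\<Inter>n. N (Suc n))"
      by (simp add: N_def image_comp)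
    also have "\<dots> = D"
      unfolding D_def using decseq_SucD[OF dec] by blast
    finally show ?thesis .
  qed
  ultimately consider "D = {}" | "D = UNIV"
    using invariant_closed_cases by blast
  then show ?thesis
  proof cases
    case 1
    then obtain n where "N n = {}"
      using compact_space_imp_nest[OF assms(1) closed_N _ dec] unfolding D_def by blast
    then show ?thesis by (simp add: N_def)
  next
    case 2
    moreover have "D \<subseteq> N 0" unfolding D_def by blast
    ultimately show ?thesis by (auto simp: N_def)
  qed
qed

lemma forward_hit:
  assumes "compact_space X" "openin X W" "W \<noteq> {}"
  shows "\<exists>j\<ge>1. (T ^^ j) y \<in> W"
proof -
  define C where "C = {x. \<forall>j\<ge>1. (T ^^ j) x \<notin> W}"
  have "closedin X (topspace X - W)"
    using assms(2) by blast
  then have "closedin X {x \<in> topspace X. (T ^^ j) x \<in> topspace X - W}" for j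
    using continuous_funpow closedin_continuous_map_preimage by blast
  then have "closedin X (\<Inter>j\<in>{1..}. {x \<in> topspace X. (T ^^ j) x \<in> topspace X - W})"
    by (intro closedin_INT) blast+
  moreover have "C = (\<Inter>j\<in>{1..}. {x \<in> topspace X. (T ^^ j) x \<in> topspace X - W})"
    using topspace_UNIV by (auto simp: C_def)
  ultimately have "closedin X C"
    by simp
  moreover have "T ` C \<subseteq> C"
  proof
    fix z assume "z \<in> T ` C"
    then obtain x where x: "x \<in> C" "z = T x" by blast
    have "(T ^^ j) (T x) = (T ^^ Suc j) x" for j
      by (simp add: funpow_Suc_right del: funpow.simps)
    then show "z \<in> C" using x by (auto simp: C_def simp del: funpow.simps)
  qed
  moreover obtain w where "w \<in> W" using assms(3) by auto
  then have "(T ^^ 1) (inv T w) \<in> W" by simp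
  then have "inv T w \<notin> C"
    unfolding C_def by blast
  ultimately have "C = {}"
    using forward_invariant_closed_cases[OF assms(1)] by blast
  then show ?thesis by (auto simp: C_def)
qed

lemma backward_hit:
  assumes "compact_space X" "openin X W" "W \<noteq> {}"
  shows "\<exists>j\<ge>1. (inv T ^^ j) y \<in> W"
proof -
  interpret inverse: minimal_system X "inv T"
    by (rule minimal_system_inv)
  show ?thesis
    using inverse.forward_hit[OF assms] .
qed

lemma image_eq_if_preimage_eq:
  assumes "\<And>x. T x \<in> S \<longleftrightarrow> x \<in> S"
  shows "T ` S = S"
proof
  show "T ` S \<subseteq> S" using assms by auto
  show "S \<subseteq> T ` S"
  proof
    fix y assume "y \<in> S"
    then have "inv T y \<in> S" using assms[of "inv T y"] by simp
    then show "y \<in> T ` S" using image_eqI[of y T "inv T y" S] by simp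
  qed
qed

lemma preimage_invariant_closed_cases:
  "closedin X S \<Longrightarrow> (\<And>x. T x \<in> S \<longleftrightarrow> x \<in> S) \<Longrightarrow> S = {} \<or> S = UNIV"
  using invariant_closed_cases image_eq_if_preimage_eq by blast

text \<open>A periodic orbit would be a finite, hence closed, invariant set.\<close>
lemma aperiodic:
  assumes "compact_space X" "Hausdorff_space X" "infinite (UNIV :: 'a set)" "(T ^^ i) x = x"
  shows "i = 0"
proof (rule ccontr)
  assume "i \<noteq> 0"
  define P where "P = range (\<lambda>k. (T ^^ k) x)"
  have "(T ^^ k) x \<in> (\<lambda>k. (T ^^ k) x) ` {..<i}" for k
  proof (rule image_eqI[where f = "\<lambda>k. (T ^^ k) x"])
    show "(T ^^ k) x = (T ^^ (k mod i)) x"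
      using funpow_mod_eq[where m = k, OF assms(4)] by simp
    show "k mod i \<in> {..<i}"
      using \<open>i \<noteq> 0\<close> by simp
  qed
  then have "P = (\<lambda>k. (T ^^ k) x) ` {..<i}"
    unfolding P_def by blast
  then have "finite P" by simp
  then have "closedin X P"
    using closedin_Hausdorff_finite[OF assms(2)] topspace_UNIV by simp
  moreover have "T ` P \<subseteq> P"
  proof
    fix z assume "z \<in> T ` P"
    then obtain k where "z = (T ^^ Suc k) x" unfolding P_def by auto
    then show "z \<in> P" unfolding P_def by blast
  qed
  moreover have "P \<noteq> {}" by (simp add: P_def)
  ultimately have "P = UNIV"
    using forward_invariant_closed_cases[OF assms(1)] by blast
  then show False
    using \<open>finite P\<close> assms(3) by simp
qed

lemma funpow_orbit_inj:
  assumes "compact_space X" "Hausdorff_space X" "infinite (UNIV :: 'a set)" "(T ^^ a) x = (T ^^ b) x"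
  shows "a = b"
proof -
  have *: "a = b" if "a \<le> b" "(T ^^ a) x = (T ^^ b) x" for a b
  proof -
    have "(T ^^ (b - a)) ((T ^^ a) x) = (T ^^ a) x"
      using that by (metis funpow_add le_add_diff_inverse2 o_apply)
    then show ?thesis
      using aperiodic[OF assms(1-3)] that(1) by force
  qed
  show ?thesis
    using *[of a b] *[of b a] assms(4) by (cases "a \<le> b") auto
qed

end

subsection \<open>Two-point extensions\<close>

definition z2_extension :: "('a \<Rightarrow> 'a) \<Rightarrow> ('a \<Rightarrow> bool) \<Rightarrow> 'a \<times> bool \<Rightarrow> 'a \<times> bool" where
  "z2_extension T c = (\<lambda>(x, b). (T x, b \<noteq> c x))"

lemma z2_extension_apply [simp]: "z2_extension T c (x, b) = (T x, b \<noteq> c x)"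
  by (simp add: z2_extension_def)

lemma clopenin_prod_discrete:
  "clopenin X S \<Longrightarrow> clopenin (prod_topology X (discrete_topology UNIV)) (S \<times> B)"
  by (simp add: clopenin_def openin_prod_Times_iff closedin_prod_Times_iff)

lemma continuous_map_z2_extension:
  assumes "continuous_map X X T" and "clopenin X {x \<in> topspace X. c x}"
  shows "continuous_map (prod_topology X (discrete_topology UNIV))
           (prod_topology X (discrete_topology UNIV)) (z2_extension T c)"
proof -
  let ?Y = "prod_topology X (discrete_topology (UNIV :: bool set))"
  let ?S = "{x \<in> topspace X. c x}"
  have "{y \<in> topspace ?Y. snd y \<noteq> c (fst y)} = ?S \<times> {False} \<union> (topspace X - ?S) \<times> {True}"
    by auto
  moreover have "clopenin X (topspace X - ?S)"
    using assms(2) by (simp add: clopenin_Diff)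
  ultimately have "clopenin ?Y {y \<in> topspace ?Y. snd y \<noteq> c (fst y)}"
    using assms(2) by (simp add: clopenin_Un clopenin_prod_discrete)
  then have "continuous_map ?Y (discrete_topology UNIV) (\<lambda>y. snd y \<noteq> c (fst y))"
    by (simp add: continuous_map_bool_iff)
  moreover have "continuous_map ?Y X (\<lambda>y. T (fst y))"
    using continuous_map_compose[OF continuous_map_fst assms(1)] by (simp add: o_def)
  ultimately have "continuous_map ?Y ?Y (\<lambda>y. (T (fst y), snd y \<noteq> c (fst y)))"
    by (intro continuous_map_pairedI)
  then show ?thesis
    by (simp add: z2_extension_def case_prod_unfold)
qed

context minimal_system
begin

lemma homeomorphic_z2_extension:
  assumes "clopenin X {x. c x}"
  shows "homeomorphic_map (prod_topology X (discrete_topology UNIV))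
           (prod_topology X (discrete_topology UNIV)) (z2_extension T c)"
proof -
  have "clopenin X {x. c (inv T x)}"
    using clopenin_continuous_map_preimage[OF continuous_inv assms] topspace_UNIV by simp
  then have "homeomorphic_maps (prod_topology X (discrete_topology UNIV))
      (prod_topology X (discrete_topology UNIV)) (z2_extension T c) (z2_extension (inv T) (c \<circ> inv T))"
    using assms continuous continuous_inv topspace_UNIV
    by (auto simp: homeomorphic_maps_def intro!: continuous_map_z2_extension)
  then show ?thesis
    using homeomorphic_map_maps by blast
qed

lemma closedin_z2_fibre:
  "closedin (prod_topology X (discrete_topology UNIV)) A \<Longrightarrow> closedin X {x. (x, b) \<in> A}"
proof -
  assume "closedin (prod_topology X (discrete_topology UNIV)) A"
  moreover have "continuous_map X (prod_topology X (discrete_topology UNIV)) (\<lambda>x. (x, b))"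
    by (intro continuous_map_pairedI) auto
  ultimately show ?thesis
    using closedin_continuous_map_preimage topspace_UNIV by fastforce
qed

lemma z2_extension_invariant_iff:
  assumes "z2_extension T c ` A = A"
  shows "(T x, b) \<in> A \<longleftrightarrow> (x, b \<noteq> c x) \<in> A"
proof -
  have "inj (z2_extension T c)"
    using bij_is_inj[OF bij] by (auto simp: inj_def z2_extension_def)
  then have "z2_extension T c (x, b \<noteq> c x) \<in> A \<longleftrightarrow> (x, b \<noteq> c x) \<in> A"
    using inj_image_mem_iff assms by metis
  then show ?thesis
    by (cases b; cases "c x") simp_all
qed

text \<open>The shadows in \<open>X\<close> of \<open>A\<close> (points with at least one lift in \<open>A\<close>) and of the points with
  both lifts in \<open>A\<close> are closed and invariant. So either \<open>A\<close> is empty or everything, or every point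
  has exactly one lift in \<open>A\<close>.\<close>
lemma z2_extension_invariant_closed_cases:
  assumes "closedin (prod_topology X (discrete_topology UNIV)) A" "z2_extension T c ` A = A"
  shows "A = {} \<or> A = UNIV \<or> (\<exists>g. clopenin X {x. g x} \<and> (\<forall>x b. (x, b) \<in> A \<longleftrightarrow> b = g x))"
proof -
  define F where "F b = {x. (x, b) \<in> A}" for b
  have closed_F: "closedin X (F b)" for b
    unfolding F_def by (rule closedin_z2_fibre[OF assms(1)])
  note lift = z2_extension_invariant_iff[OF assms(2)]
  have "T x \<in> F True \<union> F False \<longleftrightarrow> x \<in> F True \<union> F False" for x
    by (cases "c x") (auto simp: F_def lift)
  then have some_lift: "F True \<union> F False = {} \<or> F True \<union> F False = UNIV"
    using preimage_invariant_closed_cases closed_F closedin_Un by blast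
  have "T x \<in> F True \<inter> F False \<longleftrightarrow> x \<in> F True \<inter> F False" for x
    by (cases "c x") (auto simp: F_def lift)
  then have both_lifts: "F True \<inter> F False = {} \<or> F True \<inter> F False = UNIV"
    using preimage_invariant_closed_cases closed_F closedin_Int by blast
  consider "F True \<inter> F False = UNIV" | "F True \<union> F False = {}"
    | "F True \<inter> F False = {}" "F True \<union> F False = UNIV"
    using some_lift both_lifts by blast
  then show ?thesis
  proof cases
    case 1
    then have "(x, b) \<in> A" for x b
      by (cases b) (auto simp: F_def)
    then show ?thesis
      by (metis UNIV_eq_I surj_pair)
  next
    case 2
    then have "(x, b) \<notin> A" for x b
      by (cases b) (auto simp: F_def)
    then show ?thesis
      by (metis all_not_in_conv surj_pair)
  next
    case 3
    then have "F True = topspace X - F False"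
      using topspace_UNIV by blast
    then have "openin X (F True)"
      using openin_diff[OF openin_topspace closed_F[of False]] by simp
    then have "clopenin X (F True)"
      using closed_F by (simp add: clopenin_def)
    moreover have "(x, b) \<in> A \<longleftrightarrow> b = ((x, True) \<in> A)" for x b
      using 3 by (cases b) (auto simp: F_def)
    ultimately show ?thesis
      unfolding F_def by blast
  qed
qed

lemma minimal_z2_extension:
  assumes "clopenin X {x. c x}"
    and not_coboundary: "\<nexists>g. clopenin X {x. g x} \<and> (\<forall>x. g (T x) = (g x \<noteq> c x))"
  shows "minimal_system (prod_topology X (discrete_topology UNIV)) (z2_extension T c)"
proof
  let ?Y = "prod_topology X (discrete_topology (UNIV :: bool set))"
  show "topspace ?Y = UNIV" using topspace_UNIV by simp
  have "A = {} \<or> A = topspace ?Y" if A: "closedin ?Y A" "z2_extension T c ` A = A" for A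
  proof -
    consider "A = {}" | "A = UNIV"
      | g where "clopenin X {x. g x}" "\<And>x b. (x, b) \<in> A \<longleftrightarrow> b = g x"
      using z2_extension_invariant_closed_cases[OF A] by blast
    then show ?thesis
    proof cases
      case (3 g)
      have "g (T x) = (g x \<noteq> c x)" for x
        using z2_extension_invariant_iff[OF A(2), of x "g (T x)"] 3(2)[of "T x"] 3(2)[of x] by auto
      then show ?thesis
        using 3(1) not_coboundary by blast
    qed (use topspace_UNIV in auto)
  qed
  then show "minimal_homeo ?Y (z2_extension T c)"
    using homeomorphic_z2_extension[OF assms(1)] by (simp add: minimal_homeo_def)
qed

end

subsection \<open>Isometries of the circle\<close>

lemma unit_circle_eq_by_distances:
  fixes a b :: complex
  assumes "cmod a = 1" "cmod b = 1" "cmod (a - 1) = cmod (b - 1)" "cmod (a - \<i>) = cmod (b - \<i>)"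
  shows "a = b"
proof -
  have unit: "Re a ^ 2 + Im a ^ 2 = 1" "Re b ^ 2 + Im b ^ 2 = 1"
    using assms(1,2) cmod_power2[of a] cmod_power2[of b] by simp_all
  have "(cmod (a - 1))\<^sup>2 = (cmod (b - 1))\<^sup>2" using assms(3) by simp
  then have "(Re a - 1) ^ 2 + Im a ^ 2 = (Re b - 1) ^ 2 + Im b ^ 2"
    by (simp add: cmod_power2)
  then have "Re a = Re b"
    using unit by (simp add: power2_eq_square algebra_simps)
  have "(cmod (a - \<i>))\<^sup>2 = (cmod (b - \<i>))\<^sup>2" using assms(4) by simp
  then have "Re a ^ 2 + (Im a - 1) ^ 2 = Re b ^ 2 + (Im b - 1) ^ 2"
    by (simp add: cmod_power2)
  then have "Im a = Im b"
    using unit by (simp add: power2_eq_square algebra_simps)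
  show ?thesis
    using \<open>Re a = Re b\<close> \<open>Im a = Im b\<close> by (simp add: complex_eq_iff)
qed

lemma circle_isom_norm: "circle_isom f \<Longrightarrow> z \<in> Circ \<Longrightarrow> cmod (f z) = 1"
  unfolding circle_isom_def Circ_def by auto

lemma circle_isom_dist:
  "circle_isom f \<Longrightarrow> z \<in> Circ \<Longrightarrow> w \<in> Circ \<Longrightarrow> cmod (f z - f w) = cmod (z - w)"
  unfolding circle_isom_def by (simp add: dist_norm)

lemma one_in_Circ [simp]: "1 \<in> Circ" and ii_in_Circ [simp]: "\<i> \<in> Circ"
  by (simp_all add: Circ_def)

lemma circle_isom_ii_cases:
  assumes "circle_isom f"
  shows "f \<i> = \<i> * f 1 \<or> f \<i> = - \<i> * f 1"
proof -
  have c: "cmod (f 1) = 1" using circle_isom_norm[OF assms, of 1] by simp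
  define w where "w = f \<i> / f 1"
  have "cmod w = 1"
    using circle_isom_norm[OF assms, of \<i>] c by (simp add: w_def norm_divide)
  then have unit: "Re w ^ 2 + Im w ^ 2 = 1"
    using cmod_power2[of w] by simp
  have "f \<i> - f 1 = f 1 * (w - 1)"
    using c by (auto simp: w_def field_simps)
  then have "cmod (w - 1) = cmod (\<i> - 1)"
    using circle_isom_dist[OF assms, of \<i> 1] c by (simp add: norm_mult)
  then have "(cmod (w - 1))\<^sup>2 = (cmod (\<i> - 1))\<^sup>2" by simp
  then have "(Re w - 1) ^ 2 + Im w ^ 2 = 2"
    by (simp add: cmod_power2)
  then have "Re w = 0" "Im w ^ 2 = 1"
    using unit by (simp_all add: power2_eq_square algebra_simps)
  then have "w = \<i> \<or> w = - \<i>"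
    by (auto simp: complex_eq_iff power2_eq_1_iff)
  moreover have "f \<i> = w * f 1"
    using c by (auto simp: w_def)
  ultimately show ?thesis
    by (auto simp: mult.commute)
qed

lemma circle_isom_preserves_orientation_iff:
  assumes "circle_isom f"
  shows "preserves_orientation f \<longleftrightarrow> f \<i> = \<i> * f 1"
proof
  assume "preserves_orientation f"
  then obtain c where "\<forall>z\<in>Circ. f z = c * z"
    unfolding preserves_orientation_def by blast
  then show "f \<i> = \<i> * f 1" by simp
next
  assume rotation_at_ii: "f \<i> = \<i> * f 1"
  have c: "cmod (f 1) = 1" using circle_isom_norm[OF assms, of 1] by simp
  have "f z = f 1 * z" if z: "z \<in> Circ" for z
  proof -
    define g where "g = f z / f 1"
    have fz: "f z = f 1 * g" using c by (auto simp: g_def)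
    have "cmod g = 1"
      using circle_isom_norm[OF assms z] c by (simp add: g_def norm_divide)
    moreover have "f z - f 1 = f 1 * (g - 1)"
      by (simp add: fz algebra_simps)
    then have "cmod (g - 1) = cmod (z - 1)"
      using circle_isom_dist[OF assms z, of 1] c by (simp add: norm_mult)
    moreover have "f z - f \<i> = f 1 * (g - \<i>)"
      using rotation_at_ii by (simp add: fz algebra_simps)
    then have "cmod (g - \<i>) = cmod (z - \<i>)"
      using circle_isom_dist[OF assms z, of \<i>] c by (simp add: norm_mult)
    moreover have "cmod z = 1" using z by (simp add: Circ_def)
    ultimately have "g = z" by (intro unit_circle_eq_by_distances)
    then show ?thesis using fz by simp
  qed
  then show "preserves_orientation f"
    unfolding preserves_orientation_def by blast
qed

subsection \<open>Return times of a minimal Cantor system\<close>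

lemma openin_Least_level:
  fixes P :: "nat \<Rightarrow> 'a set"
  assumes "topspace X = UNIV" and "\<And>j. clopenin X (P j)" and "\<And>x. \<exists>j. x \<in> P j"
  shows "openin X {x. (LEAST j. x \<in> P j) = k}"
proof -
  have "{x. (LEAST j. x \<in> P j) = k} = P k \<inter> ((\<Inter>i\<in>{..<k}. topspace X - P i) \<inter> topspace X)"
  proof (intro set_eqI iffI)
    fix x assume "x \<in> {x. (LEAST j. x \<in> P j) = k}"
    then have k: "(LEAST j. x \<in> P j) = k" by simp
    have "x \<in> P k"
      using LeastI_ex[OF assms(3)[of x]] k by simp
    moreover have "x \<notin> P i" if "i < k" for i
      using not_less_Least[of i "\<lambda>j. x \<in> P j"] that k by simp
    ultimately show "x \<in> P k \<inter> ((\<Inter>i\<in>{..<k}. topspace X - P i) \<inter> topspace X)"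
      using assms(1) by blast
  next
    fix x assume x: "x \<in> P k \<inter> ((\<Inter>i\<in>{..<k}. topspace X - P i) \<inter> topspace X)"
    have "(LEAST j. x \<in> P j) = k"
    proof (rule Least_equality)
      show "x \<in> P k" using x by blast
      show "k \<le> j" if "x \<in> P j" for j
        using x that not_le by blast
    qed
    then show "x \<in> {x. (LEAST j. x \<in> P j) = k}" by simp
  qed
  also have "openin X \<dots>"
    using assms(2) by (intro openin_Int openin_INT) (auto simp: clopenin_def)
  finally show ?thesis .
qed

locale minimal_cantor = minimal_system Cantor \<alpha> for \<alpha> :: "cantor \<Rightarrow> cantor"
begin

lemma forward_hit_clopen: "clopenin Cantor U \<Longrightarrow> U \<noteq> {} \<Longrightarrow> \<exists>j\<ge>1. (\<alpha> ^^ j) x \<in> U"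
  using forward_hit[OF compact_space_Cantor] by (simp add: clopenin_def)

lemma backward_hit_clopen: "clopenin Cantor U \<Longrightarrow> U \<noteq> {} \<Longrightarrow> \<exists>j. (inv \<alpha> ^^ j) x \<in> U"
  using backward_hit[OF compact_space_Cantor] by (auto simp: clopenin_def)

lemma orbit_inj: "(\<alpha> ^^ a) x = (\<alpha> ^^ b) x \<Longrightarrow> a = b"
  using funpow_orbit_inj[OF compact_space_Cantor Hausdorff_space_Cantor infinite_UNIV_cantor] .

lemma inv_funpow_cancel [simp]: "(inv \<alpha> ^^ n) ((\<alpha> ^^ n) x) = x"
  and funpow_inv_cancel [simp]: "(\<alpha> ^^ n) ((inv \<alpha> ^^ n) x) = x"
  using inv_fn_o_fn_is_id[OF bij, of n] fn_o_inv_fn_is_id[OF bij, of n] by (simp_all add: fun_eq_iff)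

lemma inv_funpow_Suc: "(inv \<alpha> ^^ Suc n) x = (inv \<alpha> ^^ n) (inv \<alpha> x)"
  by (simp add: funpow_Suc_right del: funpow.simps)

definition first_return :: "cantor set \<Rightarrow> cantor \<Rightarrow> nat" where
  "first_return U x = (LEAST j. 1 \<le> j \<and> (\<alpha> ^^ j) x \<in> U)"

definition last_visit :: "cantor set \<Rightarrow> cantor \<Rightarrow> nat" where
  "last_visit U x = (LEAST j. (inv \<alpha> ^^ j) x \<in> U)"

context
  fixes U assumes U: "clopenin Cantor U" "U \<noteq> {}"
begin

lemma first_return_pos: "1 \<le> first_return U x"
  and funpow_first_return: "(\<alpha> ^^ first_return U x) x \<in> U"
  and before_first_return: "1 \<le> i \<Longrightarrow> i < first_return U x \<Longrightarrow> (\<alpha> ^^ i) x \<notin> U"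
  using LeastI_ex[OF forward_hit_clopen[OF U]] not_less_Least[of i "\<lambda>j. 1 \<le> j \<and> (\<alpha> ^^ j) x \<in> U"]
  unfolding first_return_def by auto

lemma funpow_last_visit: "(inv \<alpha> ^^ last_visit U x) x \<in> U"
  and before_last_visit: "i < last_visit U x \<Longrightarrow> (inv \<alpha> ^^ i) x \<notin> U"
  using LeastI_ex[OF backward_hit_clopen[OF U]] not_less_Least[of i "\<lambda>j. (inv \<alpha> ^^ j) x \<in> U"]
  unfolding last_visit_def by auto

lemma openin_first_return_level: "openin Cantor {x. first_return U x = k}"
proof -
  have "clopenin Cantor {x. 1 \<le> j \<and> (\<alpha> ^^ j) x \<in> U}" for j
  proof (cases "1 \<le> j")
    case True
    then show ?thesis
      using clopenin_continuous_map_preimage[OF continuous_funpow U(1), of j] by simp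
  qed simp
  then show ?thesis
    using openin_Least_level[of Cantor "\<lambda>j. {x. 1 \<le> j \<and> (\<alpha> ^^ j) x \<in> U}" k]
      forward_hit_clopen[OF U]
    by (simp add: first_return_def)
qed

lemma openin_last_visit_level: "openin Cantor {x. last_visit U x = k}"
proof -
  have "clopenin Cantor {x. (inv \<alpha> ^^ j) x \<in> U}" for j
    using clopenin_continuous_map_preimage[OF continuous_inv_funpow U(1), of j] by simp
  then show ?thesis
    using openin_Least_level[of Cantor "\<lambda>j. {x. (inv \<alpha> ^^ j) x \<in> U}" k]
      backward_hit_clopen[OF U]
    by (simp add: last_visit_def)
qed

end

lemma first_return_eqI:
  assumes "1 \<le> k" "(\<alpha> ^^ k) x \<in> U" "\<And>i. 1 \<le> i \<Longrightarrow> i < k \<Longrightarrow> (\<alpha> ^^ i) x \<notin> U"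
  shows "first_return U x = k"
  unfolding first_return_def using assms by (intro Least_equality) (auto simp: not_less[symmetric])

lemma last_visit_eqI:
  assumes "(inv \<alpha> ^^ k) x \<in> U" "\<And>i. i < k \<Longrightarrow> (inv \<alpha> ^^ i) x \<notin> U"
  shows "last_visit U x = k"
  unfolding last_visit_def using assms by (intro Least_equality) (auto simp: not_less[symmetric])

lemma last_visit_in: "x \<in> U \<Longrightarrow> last_visit U x = 0"
  by (rule last_visit_eqI) auto

lemma last_visit_notin:
  assumes U: "clopenin Cantor U" "U \<noteq> {}" and "x \<notin> U"
  shows "last_visit U x = Suc (last_visit U (inv \<alpha> x))"
proof (rule last_visit_eqI)
  show "(inv \<alpha> ^^ Suc (last_visit U (inv \<alpha> x))) x \<in> U"
    unfolding inv_funpow_Suc by (rule funpow_last_visit[OF U])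
  fix i assume "i < Suc (last_visit U (inv \<alpha> x))"
  then show "(inv \<alpha> ^^ i) x \<notin> U"
    using \<open>x \<notin> U\<close> before_last_visit[OF U]
    by (cases i) (simp_all add: inv_funpow_Suc del: funpow.simps)
qed

lemma first_return_last_visit:
  assumes U: "clopenin Cantor U" "U \<noteq> {}" and "x \<in> U"
  defines "L \<equiv> last_visit U (inv \<alpha> x)"
  defines "u \<equiv> (inv \<alpha> ^^ L) (inv \<alpha> x)"
  shows "u \<in> U" "(\<alpha> ^^ L) u = inv \<alpha> x" "first_return U u = Suc L"
proof -
  show "u \<in> U" unfolding u_def L_def by (rule funpow_last_visit[OF U])
  show uL: "(\<alpha> ^^ L) u = inv \<alpha> x" unfolding u_def by simp
  show "first_return U u = Suc L"
  proof (rule first_return_eqI)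
    show "(\<alpha> ^^ Suc L) u \<in> U" using uL \<open>x \<in> U\<close> by simp
    fix i assume i: "1 \<le> i" "i < Suc L"
    then have "L = i + (L - i)" by simp
    then have "u = (inv \<alpha> ^^ i) ((inv \<alpha> ^^ (L - i)) (inv \<alpha> x))"
      unfolding u_def by (metis funpow_add o_apply)
    then have "(\<alpha> ^^ i) u = (inv \<alpha> ^^ (L - i)) (inv \<alpha> x)"
      by simp
    then show "(\<alpha> ^^ i) u \<notin> U"
      using before_last_visit[OF U, of "L - i" "inv \<alpha> x"] i by (simp add: L_def)
  qed simp
qed

definition return_map :: "cantor set \<Rightarrow> cantor \<Rightarrow> cantor" where
  "return_map U x = (if x \<in> U then (\<alpha> ^^ first_return U x) x else x)"

definition return_time :: "cantor set \<Rightarrow> cantor \<Rightarrow> int" where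
  "return_time U x = (if x \<in> U then int (first_return U x) else 0)"

context
  fixes U assumes U: "clopenin Cantor U" "U \<noteq> {}"
begin

lemma return_map_in: "x \<in> U \<Longrightarrow> return_map U x \<in> U"
  by (simp add: return_map_def funpow_first_return[OF U])

lemma continuous_return_map: "continuous_map Cantor Cantor (return_map U)"
proof -
  have "continuous_map Cantor Cantor (\<lambda>x. if x \<in> U then (\<alpha> ^^ k) x else x)" for k
    using continuous_map_if_clopenin[OF U(1) continuous_funpow[of k] continuous_map_id]
    unfolding id_def .
  then show ?thesis
    using continuous_map_glue_levels[where l = "first_return U" and H = "\<lambda>k x. if x \<in> U then (\<alpha> ^^ k) x else x"]
      openin_first_return_level[OF U]
    by (simp add: return_map_def[abs_def])
qed

lemma return_time_CZ: "return_time U \<in> CZ"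
proof -
  have "continuous_map Cantor euclidean (\<lambda>x. int k * indicator U x)" for k
    using continuous_map_int_comp[OF continuous_map_indicator_int[OF U(1)], of "\<lambda>a. int k * a"] by simp
  then have "continuous_map Cantor euclidean (\<lambda>x. int (first_return U x) * indicator U x)"
    using continuous_map_glue_levels[where l = "first_return U" and H = "\<lambda>k x. int k * indicator U x"]
      openin_first_return_level[OF U]
    by simp
  moreover have "(\<lambda>x. int (first_return U x) * indicator U x) = return_time U"
    by (auto simp: return_time_def indicator_def)
  ultimately show ?thesis by (simp add: CZ_def)
qed

text \<open>Two points of \<open>U\<close> with the same image: the one returning later would visit \<open>U\<close> before
  its first return.\<close>
lemma inj_return_map: "inj (return_map U)"
proof -
  have same: "z = z'" if zU: "z \<in> U" "z' \<in> U" and le: "first_return U z \<le> first_return U z'"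
    and eq: "(\<alpha> ^^ first_return U z) z = (\<alpha> ^^ first_return U z') z'" for z z'
  proof -
    define d where "d = first_return U z' - first_return U z"
    have "first_return U z' = first_return U z + d"
      using le by (simp add: d_def)
    then have "(\<alpha> ^^ first_return U z) z = (\<alpha> ^^ first_return U z) ((\<alpha> ^^ d) z')"
      using eq by (simp add: funpow_add)
    then have z: "z = (\<alpha> ^^ d) z'"
      using injD[OF inj_fn[OF bij_is_inj[OF bij]]] by blast
    have "d < first_return U z'"
      using first_return_pos[OF U, of z] le unfolding d_def by linarith
    then have "d = 0"
      using before_first_return[OF U, of d z'] z zU(1) by (cases "d = 0") auto
    then show ?thesis using z by simp
  qed
  show ?thesis
  proof (rule injI)
    fix x x' assume eq: "return_map U x = return_map U x'"
    consider "x \<in> U" "x' \<in> U" | "x \<in> U" "x' \<notin> U" | "x \<notin> U" "x' \<in> U" | "x \<notin> U" "x' \<notin> U"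
      by blast
    then show "x = x'"
    proof cases
      case 1
      then show ?thesis
        using same[of x x'] same[of x' x] eq nat_le_linear by (simp add: return_map_def) blast
    next
      case 2
      then show ?thesis using return_map_in[of x] eq by (simp add: return_map_def)
    next
      case 3
      then show ?thesis using return_map_in[of x'] eq by (simp add: return_map_def)
    next
      case 4
      then show ?thesis using eq by (simp add: return_map_def)
    qed
  qed
qed

lemma surj_return_map: "surj (return_map U)"
proof -
  have "x \<in> range (return_map U)" for x
  proof (cases "x \<in> U")
    case True
    let ?u = "(inv \<alpha> ^^ last_visit U (inv \<alpha> x)) (inv \<alpha> x)"
    have "return_map U ?u = x"
      using first_return_last_visit[OF U True] by (simp add: return_map_def)
    then show ?thesis by (metis rangeI)
  next
    case False
    then have "return_map U x = x" by (simp add: return_map_def)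
    then show ?thesis by (metis rangeI)
  qed
  then show ?thesis by auto
qed

lemma full_group_cocycle_return_map: "full_group_cocycle \<alpha> (return_map U) (return_time U)"
proof -
  have "homeomorphic_map Cantor Cantor (return_map U)"
    using continuous_return_map compact_space_Cantor Hausdorff_space_Cantor inj_return_map surj_return_map
    by (intro continuous_imp_homeomorphic_map) auto
  moreover have "return_map U x = zpow \<alpha> (inv \<alpha>) (return_time U x) x" for x
    by (simp add: return_map_def return_time_def zpow_def)
  ultimately show ?thesis
    using return_time_CZ by (simp add: full_group_cocycle_def)
qed

end


lemma first_return_mono:
  assumes "clopenin Cantor U" "U \<noteq> {}" "clopenin Cantor B" "U \<subseteq> B"
  shows "first_return B x \<le> first_return U x"
proof (rule ccontr)
  assume "\<not> ?thesis"
  moreover have "B \<noteq> {}" using assms(2,4) by blast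
  ultimately have "(\<alpha> ^^ first_return U x) x \<notin> B"
    using before_first_return[OF assms(3)] first_return_pos[OF assms(1,2)] by simp
  then show False
    using funpow_first_return[OF assms(1,2)] assms(4) by blast
qed

lemma first_return_funpow:
  assumes U: "clopenin Cantor U" "U \<noteq> {}" and r: "1 \<le> r" "r < first_return U x"
  shows "first_return U ((\<alpha> ^^ r) x) = first_return U x - r"
proof (rule first_return_eqI)
  have shift: "(\<alpha> ^^ i) ((\<alpha> ^^ r) x) = (\<alpha> ^^ (i + r)) x" for i
    by (simp add: funpow_add)
  show "1 \<le> first_return U x - r" using r by simp
  show "(\<alpha> ^^ (first_return U x - r)) ((\<alpha> ^^ r) x) \<in> U"
    using funpow_first_return[OF U, of x] r by (simp add: shift)
  show "(\<alpha> ^^ i) ((\<alpha> ^^ r) x) \<notin> U" if "1 \<le> i" "i < first_return U x - r" for i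
    using before_first_return[OF U, of "i + r" x] that by (simp add: shift)
qed

lemma last_visit_funpow:
  assumes U: "clopenin Cantor U" "U \<noteq> {}" and "p \<in> U" "j < first_return U p"
  shows "last_visit U ((\<alpha> ^^ j) p) = j"
proof (rule last_visit_eqI)
  show "(inv \<alpha> ^^ j) ((\<alpha> ^^ j) p) \<in> U" using assms(3) by simp
  fix i assume "i < j"
  then have "j = i + (j - i)" by simp
  then have "(\<alpha> ^^ j) p = (\<alpha> ^^ i) ((\<alpha> ^^ (j - i)) p)"
    by (metis funpow_add o_apply)
  then have "(inv \<alpha> ^^ i) ((\<alpha> ^^ j) p) = (\<alpha> ^^ (j - i)) p"
    by simp
  then show "(inv \<alpha> ^^ i) ((\<alpha> ^^ j) p) \<notin> U"
    using before_first_return[OF U, of "j - i" p] \<open>i < j\<close> assms(4) by simp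
qed

text \<open>Shrink \<open>V\<close> to a clopen neighbourhood of \<open>p\<close> and \<open>\<alpha>\<^sup>k p\<close> avoiding the finitely many
  points in between; they are distinct from both ends because \<open>\<alpha>\<close> has no periodic points.\<close>
lemma clopen_first_return_eq:
  assumes "clopenin Cantor V" "p \<in> V" "(\<alpha> ^^ k) p \<in> V" "1 \<le> k"
  obtains B where "clopenin Cantor B" "B \<subseteq> V" "p \<in> B" "first_return B p = k"
proof -
  define S where "S = (\<lambda>i. (\<alpha> ^^ i) p) ` {1..<k}"
  have "finite S" by (simp add: S_def)
  have "p \<notin> S"
  proof
    assume "p \<in> S"
    then obtain i where "1 \<le> i" "(\<alpha> ^^ i) p = (\<alpha> ^^ 0) p" by (auto simp: S_def)
    then show False using orbit_inj[of i p 0] by simp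
  qed
  then obtain C where C: "clopenin Cantor C" "p \<in> C" "C \<inter> S = {}"
    using Cantor_clopen_avoiding_finite[OF \<open>finite S\<close>] by blast
  have "(\<alpha> ^^ k) p \<notin> S"
  proof
    assume "(\<alpha> ^^ k) p \<in> S"
    then obtain i where "i < k" "(\<alpha> ^^ i) p = (\<alpha> ^^ k) p" by (auto simp: S_def)
    then show False using orbit_inj[of i p k] by simp
  qed
  then obtain D where D: "clopenin Cantor D" "(\<alpha> ^^ k) p \<in> D" "D \<inter> S = {}"
    using Cantor_clopen_avoiding_finite[OF \<open>finite S\<close>] by blast
  define B where "B = V \<inter> (C \<union> D)"
  have B: "clopenin Cantor B" "B \<subseteq> V" "p \<in> B"
    using assms(1,2) C D by (auto simp: B_def clopenin_Int clopenin_Un)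
  moreover have "first_return B p = k"
  proof (rule first_return_eqI)
    show "(\<alpha> ^^ k) p \<in> B" using assms(3) D(2) by (simp add: B_def)
    show "(\<alpha> ^^ i) p \<notin> B" if "1 \<le> i" "i < k" for i
    proof -
      have "(\<alpha> ^^ i) p \<in> S" using that by (simp add: S_def)
      then show ?thesis using C(3) D(3) by (auto simp: B_def)
    qed
  qed (rule assms(4))
  ultimately show thesis using that by blast
qed

end

lemma K1_equiv_refl: "K1_equiv \<alpha> \<phi> x0 g g"
  unfolding K1_equiv_def by (intro bexI[of _ "\<lambda>x. 0"]) (auto simp: astar_def CZ_def)

lemma K1_equiv_add:
  assumes "K1_equiv \<alpha> \<phi> x0 g1 h1" and "K1_equiv \<alpha> \<phi> x0 g2 h2"
  shows "K1_equiv \<alpha> \<phi> x0 (\<lambda>x. g1 x + g2 x) (\<lambda>x. h1 x + h2 x)"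
proof -
  obtain f1 where f1: "f1 \<in> CZ" "f1 x0 = 0" "\<And>x. g1 x - h1 x = f1 x - astar \<alpha> \<phi> f1 x"
    using assms(1) unfolding K1_equiv_def by blast
  obtain f2 where f2: "f2 \<in> CZ" "f2 x0 = 0" "\<And>x. g2 x - h2 x = f2 x - astar \<alpha> \<phi> f2 x"
    using assms(2) unfolding K1_equiv_def by blast
  have "(\<lambda>x. f1 x + f2 x) \<in> CZ"
    using f1(1) f2(1) continuous_map_int_binop[of Cantor f1 f2 "(+)"] by (simp add: CZ_def)
  moreover have "astar \<alpha> \<phi> (\<lambda>x. f1 x + f2 x) x = astar \<alpha> \<phi> f1 x + astar \<alpha> \<phi> f2 x" for x
    by (simp add: astar_def algebra_simps)
  ultimately show ?thesis
    unfolding K1_equiv_def using f1 f2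
    by (intro bexI[of _ "\<lambda>x. f1 x + f2 x"]) (auto simp: algebra_simps)
qed

subsection \<open>Orientation cocycle of a nonorientable extension\<close>

locale nonorientable_system = minimal_cantor \<alpha> for \<alpha> +
  fixes \<phi> :: "cantor \<Rightarrow> complex \<Rightarrow> complex"
  assumes circle_isom: "\<forall>x. circle_isom (\<phi> x)"
    and continuous_\<phi>: "continuous_map (prod_topology Cantor (top_of_set Circ)) euclidean (\<lambda>(x, t). \<phi> x t)"
    and not_orientation_preserving: "\<not> orientation_preserving \<alpha> \<phi>"
begin

lemma orient_iff: "orient \<phi> x \<longleftrightarrow> \<phi> x \<i> = - \<i> * \<phi> x 1"
proof -
  have "\<phi> x 1 \<noteq> 0"
    using circle_isom_norm[of "\<phi> x" 1] circle_isom by auto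
  then have "\<i> * \<phi> x 1 \<noteq> - \<i> * \<phi> x 1" by simp
  moreover have "\<phi> x \<i> = \<i> * \<phi> x 1 \<or> \<phi> x \<i> = - \<i> * \<phi> x 1"
    using circle_isom_ii_cases circle_isom by blast
  ultimately show ?thesis
    using circle_isom by (auto simp: orient_def circle_isom_preserves_orientation_iff)
qed

lemma closedin_rotation_at_ii: "closedin Cantor {x. \<phi> x \<i> = c * \<phi> x 1}"
proof -
  have at: "continuous_map Cantor euclidean (\<lambda>x. \<phi> x t)" if "t \<in> Circ" for t
  proof -
    have "continuous_map Cantor (prod_topology Cantor (top_of_set Circ)) (\<lambda>x. (x, t))"
      using that by (intro continuous_map_pairedI) auto
    from continuous_map_compose[OF this continuous_\<phi>] show ?thesis by (simp add: o_def)
  qed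
  have "continuous_map Cantor euclidean (\<lambda>x. c * \<phi> x 1)"
    using at[of 1] by (simp add: continuous_map_atin tendsto_mult_left)
  then have "continuous_map Cantor euclidean (\<lambda>x. \<phi> x \<i> - c * \<phi> x 1)"
    using at[of \<i>] by (intro continuous_map_diff) auto
  from closedin_continuous_map_preimage[OF this, of "{0}"] show ?thesis
    by simp
qed

lemma clopen_orient: "clopenin Cantor {x. orient \<phi> x}"
proof -
  have "{x. orient \<phi> x} = {x. \<phi> x \<i> = - \<i> * \<phi> x 1}"
    using orient_iff by blast
  then have "closedin Cantor {x. orient \<phi> x}"
    using closedin_rotation_at_ii[of "- \<i>"] by simp
  moreover have "{x. orient \<phi> x} = topspace Cantor - {x. \<phi> x \<i> = \<i> * \<phi> x 1}"
    using circle_isom by (auto simp: orient_def circle_isom_preserves_orientation_iff)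
  then have "openin Cantor {x. orient \<phi> x}"
    using openin_diff[OF openin_topspace closedin_rotation_at_ii] by simp
  ultimately show ?thesis
    by (simp add: clopenin_def)
qed

definition orient_sign :: "cantor \<Rightarrow> int" where
  "orient_sign x = (if orient \<phi> x then -1 else 1)"

definition orient_cocycle :: "nat \<Rightarrow> cantor \<Rightarrow> int" where
  "orient_cocycle k x = (\<Prod>j<k. orient_sign ((\<alpha> ^^ j) x))"

lemma orient_sign_cases: "orient_sign x = 1 \<or> orient_sign x = -1"
  by (simp add: orient_sign_def)

lemma continuous_orient_sign: "continuous_map Cantor euclidean orient_sign"
proof -
  have "orient_sign = (\<lambda>x. 1 - 2 * indicator {x. orient \<phi> x} x)"
    by (auto simp: orient_sign_def indicator_def)
  then show ?thesis
    by (simp only:) (rule continuous_map_int_comp[OF continuous_map_indicator_int[OF clopen_orient]])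
qed

lemma orient_cocycle_0 [simp]: "orient_cocycle 0 x = 1"
  by (simp add: orient_cocycle_def)

lemma orient_cocycle_Suc: "orient_cocycle (Suc k) x = orient_cocycle k x * orient_sign ((\<alpha> ^^ k) x)"
  by (simp add: orient_cocycle_def)

lemma orient_cocycle_Suc': "orient_cocycle (Suc k) x = orient_sign x * orient_cocycle k (\<alpha> x)"
  unfolding orient_cocycle_def prod.lessThan_Suc_shift
  by (simp add: funpow_Suc_right del: funpow.simps)

lemma orient_cocycle_add: "orient_cocycle (a + b) x = orient_cocycle a x * orient_cocycle b ((\<alpha> ^^ a) x)"
proof (induction b)
  case (Suc b)
  have "(\<alpha> ^^ (a + b)) x = (\<alpha> ^^ b) ((\<alpha> ^^ a) x)"
    by (simp add: funpow_add add.commute[of a])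
  then show ?case
    using Suc by (simp add: orient_cocycle_Suc mult.assoc)
qed simp

lemma orient_cocycle_cases: "orient_cocycle k x = 1 \<or> orient_cocycle k x = -1"
proof (induction k)
  case (Suc k)
  then show ?case
    using orient_sign_cases[of "(\<alpha> ^^ k) x"] by (auto simp: orient_cocycle_Suc)
qed simp

lemma continuous_orient_cocycle: "continuous_map Cantor euclidean (orient_cocycle k)"
proof (induction k)
  case (Suc k)
  have "continuous_map Cantor euclidean (\<lambda>x. orient_sign ((\<alpha> ^^ k) x))"
    using continuous_map_compose[OF continuous_funpow continuous_orient_sign] by (simp add: o_def)
  from continuous_map_int_binop[OF Suc this, of "(*)"] show ?case
    by (simp add: orient_cocycle_Suc[abs_def])
qed (simp add: orient_cocycle_def)

lemma minimal_double_cover: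
  "minimal_system (prod_topology Cantor (discrete_topology UNIV)) (z2_extension \<alpha> (orient \<phi>))"
proof (rule minimal_z2_extension[OF clopen_orient])
  show "\<nexists>g. clopenin Cantor {x. g x} \<and> (\<forall>x. g (\<alpha> x) = (g x \<noteq> orient \<phi> x))"
  proof
    assume "\<exists>g. clopenin Cantor {x. g x} \<and> (\<forall>x. g (\<alpha> x) = (g x \<noteq> orient \<phi> x))"
    then obtain g where g: "clopenin Cantor {x. g x}" "\<And>x. g (\<alpha> x) = (g x \<noteq> orient \<phi> x)"
      by blast
    have "clopenin Cantor {x. g (\<alpha> x)}"
      using clopenin_continuous_map_preimage[OF continuous g(1)] by simp
    then have "continuous_map Cantor (discrete_topology UNIV) (g \<circ> \<alpha>)"
      by (simp add: continuous_map_bool_iff)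
    moreover have "orient \<phi> x \<longleftrightarrow> (g \<circ> \<alpha>) x \<noteq> (g \<circ> \<alpha>) (inv \<alpha> x)" for x
      using g(2)[of x] by auto
    ultimately show False
      using not_orientation_preserving unfolding orientation_preserving_def by blast
  qed
qed

lemma double_cover_funpow:
  "(z2_extension \<alpha> (orient \<phi>) ^^ j) (x, b) = ((\<alpha> ^^ j) x, b \<noteq> (orient_cocycle j x = -1))"
proof (induction j)
  case (Suc j)
  then show ?case
    using orient_cocycle_cases[of j x] by (auto simp: orient_cocycle_Suc orient_sign_def)
qed simp

text \<open>Lift \<open>x0\<close> to the sheet prescribed by \<open>s\<close>, go back to the sheet \<open>False\<close> over \<open>V\<close> and
  then forward to the sheet \<open>True\<close> over \<open>V\<close>: both are possible by minimality of the double cover.\<close>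
lemma twisted_return_segment:
  assumes V: "clopenin Cantor V" "V \<noteq> {}" and s: "s = 1 \<or> s = -1"
  obtains p j k where "p \<in> V" "(\<alpha> ^^ j) p = x0" "orient_cocycle j p = s" "j < k"
    "(\<alpha> ^^ k) p \<in> V" "orient_cocycle k p = -1"
proof -
  let ?Y = "prod_topology Cantor (discrete_topology (UNIV :: bool set))"
  let ?E = "z2_extension \<alpha> (orient \<phi>)"
  interpret cover: minimal_system ?Y ?E
    by (rule minimal_double_cover)
  have compact: "compact_space ?Y"
    by (simp add: compact_space_prod_topology compact_space_Cantor compact_space_discrete_topology)
  have sheet: "openin ?Y (V \<times> {b})" "V \<times> {b} \<noteq> {}" for b
    using clopenin_prod_discrete[OF V(1)] V(2) by (auto simp: clopenin_def)
  define y where "y = (x0, s = -1)"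
  have "\<exists>j\<ge>1. (inv ?E ^^ j) y \<in> V \<times> {False}"
    by (rule cover.backward_hit[OF compact sheet])
  then obtain j where "(inv ?E ^^ j) y \<in> V \<times> {False}"
    by (elim exE conjE)
  then obtain p where p: "p \<in> V" "(inv ?E ^^ j) y = (p, False)"
    by (simp add: mem_Times_iff prod_eq_iff)
  have "(?E ^^ j) ((inv ?E ^^ j) y) = y"
    using fun_cong[OF fn_o_inv_fn_is_id[OF cover.bij, of j], of y] by simp
  then have lift_to_y: "(?E ^^ j) (p, False) = y"
    using p(2) by simp
  then have "((\<alpha> ^^ j) p, orient_cocycle j p = -1) = (x0, s = -1)"
    by (simp add: double_cover_funpow y_def)
  then have x0: "(\<alpha> ^^ j) p = x0" "orient_cocycle j p = s"
    using s orient_cocycle_cases[of j p] by auto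
  have "\<exists>k\<ge>1. (?E ^^ k) y \<in> V \<times> {True}"
    by (rule cover.forward_hit[OF compact sheet])
  then obtain k where k: "k \<ge> 1" "(?E ^^ k) y \<in> V \<times> {True}"
    by (elim exE conjE)
  have "(?E ^^ (k + j)) (p, False) = (?E ^^ k) y"
    using lift_to_y by (simp add: funpow_add)
  then have "((\<alpha> ^^ (k + j)) p, orient_cocycle (k + j) p = -1) \<in> V \<times> {True}"
    using k(2) by (simp add: double_cover_funpow)
  then show thesis
    using that[of p j "k + j"] p(1) x0 k(1) by (simp add: mem_Times_iff)
qed

definition last_visit_sign :: "cantor set \<Rightarrow> cantor \<Rightarrow> int" where
  "last_visit_sign U x = orient_cocycle (last_visit U x) ((inv \<alpha> ^^ last_visit U x) x)"

definition odd_returns :: "cantor set \<Rightarrow> bool" where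
  "odd_returns U \<longleftrightarrow> (\<forall>u\<in>U. orient_cocycle (first_return U u) u = -1)"

lemma last_visit_sign_cases: "last_visit_sign U x = 1 \<or> last_visit_sign U x = -1"
  unfolding last_visit_sign_def by (rule orient_cocycle_cases)

lemma last_visit_sign_in: "x \<in> U \<Longrightarrow> last_visit_sign U x = 1"
  by (simp add: last_visit_sign_def last_visit_in)

context
  fixes U assumes U: "clopenin Cantor U" "U \<noteq> {}"
begin

lemma continuous_last_visit_sign: "continuous_map Cantor euclidean (last_visit_sign U)"
proof -
  have "continuous_map Cantor euclidean (\<lambda>x. orient_cocycle k ((inv \<alpha> ^^ k) x))" for k
    using continuous_map_compose[OF continuous_inv_funpow continuous_orient_cocycle] by (simp add: o_def)
  then show ?thesis
    using continuous_map_glue_levels[where l = "last_visit U" and H = "\<lambda>k x. orient_cocycle k ((inv \<alpha> ^^ k) x)"]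
      openin_last_visit_level[OF U]
    by (simp add: last_visit_sign_def[abs_def])
qed

lemma last_visit_sign_notin:
  assumes "x \<notin> U"
  shows "last_visit_sign U x = last_visit_sign U (inv \<alpha> x) * orient_sign (inv \<alpha> x)"
proof -
  let ?L = "last_visit U (inv \<alpha> x)"
  let ?u = "(inv \<alpha> ^^ ?L) (inv \<alpha> x)"
  have L: "last_visit U x = Suc ?L"
    by (rule last_visit_notin[OF U assms])
  have base: "(inv \<alpha> ^^ Suc ?L) x = ?u"
    by (rule inv_funpow_Suc)
  have "last_visit_sign U x = orient_cocycle (Suc ?L) ?u"
    unfolding last_visit_sign_def L base ..
  also have "\<dots> = orient_cocycle ?L ?u * orient_sign ((\<alpha> ^^ ?L) ?u)"
    by (rule orient_cocycle_Suc)
  also have "\<dots> = last_visit_sign U (inv \<alpha> x) * orient_sign (inv \<alpha> x)"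
    unfolding last_visit_sign_def funpow_inv_cancel ..
  finally show ?thesis .
qed

lemma last_visit_sign_odd_returns:
  assumes "odd_returns U" "x \<in> U"
  shows "last_visit_sign U (inv \<alpha> x) * orient_sign (inv \<alpha> x) = -1"
proof -
  let ?L = "last_visit U (inv \<alpha> x)"
  let ?u = "(inv \<alpha> ^^ ?L) (inv \<alpha> x)"
  note u = first_return_last_visit[OF U assms(2)]
  have "orient_cocycle (first_return U ?u) ?u = -1"
    using assms(1) u(1) unfolding odd_returns_def by blast
  then have "orient_cocycle (Suc ?L) ?u = -1"
    using u(3) by simp
  moreover have "orient_cocycle (Suc ?L) ?u = orient_cocycle ?L ?u * orient_sign (inv \<alpha> x)"
    using orient_cocycle_Suc u(2) by simp
  ultimately show ?thesis
    by (simp add: last_visit_sign_def)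
qed

text \<open>The transfer function is \<open>(w - w x0) / 2\<close> for the \<open>\<plusminus>1\<close>-valued \<open>w = last_visit_sign U\<close>,
  written without division.\<close>
lemma K1_equiv_odd_returns:
  assumes "odd_returns U"
  shows "K1_equiv \<alpha> \<phi> x0 (indicator U) (\<lambda>x. last_visit_sign U x0 * hphi \<alpha> \<phi> x)"
proof -
  define q where "q x = (if last_visit_sign U x = 1 then 1 else 0 :: int)" for x
  define f where "f x = q x - q x0" for x
  have "f \<in> CZ"
    using continuous_map_int_comp[OF continuous_last_visit_sign, of "\<lambda>a. (if a = 1 then 1 else 0) - q x0"]
    by (simp add: CZ_def f_def[abs_def] q_def[abs_def])
  moreover have "f x0 = 0" by (simp add: f_def)
  moreover have "indicator U x - last_visit_sign U x0 * hphi \<alpha> \<phi> x = f x - astar \<alpha> \<phi> f x" for x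
  proof -
    have astar: "astar \<alpha> \<phi> f x = orient_sign (inv \<alpha> x) * f (inv \<alpha> x)"
      by (simp add: astar_def orient_sign_def)
    have hphi: "hphi \<alpha> \<phi> x = (if orient_sign (inv \<alpha> x) = -1 then 1 else 0)"
      by (simp add: hphi_def orient_sign_def)
    note cases = last_visit_sign_cases[of U "inv \<alpha> x"] last_visit_sign_cases[of U x0]
      orient_sign_cases[of "inv \<alpha> x"]
    show ?thesis
    proof (cases "x \<in> U")
      case True
      then show ?thesis
        unfolding astar hphi f_def q_def
        using last_visit_sign_in[of x U] last_visit_sign_odd_returns[OF assms True] cases
        by (auto simp: indicator_def)
    next
      case False
      then show ?thesis
        unfolding astar hphi f_def q_def
        using last_visit_sign_notin[OF False] cases
        by (auto simp: indicator_def)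
    qed
  qed
  ultimately show ?thesis
    unfolding K1_equiv_def by blast
qed

end

subsection \<open>Reflecting clopen sets\<close>

lemma astar_funpow:
  "(astar \<alpha> \<phi> ^^ k) g y = orient_cocycle k ((inv \<alpha> ^^ k) y) * g ((inv \<alpha> ^^ k) y)"
proof (induction k arbitrary: g)
  case (Suc k)
  let ?w = "(inv \<alpha> ^^ k) y"
  have "(astar \<alpha> \<phi> ^^ Suc k) g y = (astar \<alpha> \<phi> ^^ k) (astar \<alpha> \<phi> g) y"
    by (simp add: funpow_Suc_right del: funpow.simps)
  also have "\<dots> = orient_cocycle k ?w * astar \<alpha> \<phi> g ?w"
    by (rule Suc.IH)
  also have "\<dots> = orient_sign (inv \<alpha> ?w) * orient_cocycle k ?w * g (inv \<alpha> ?w)"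
    by (simp add: astar_def orient_sign_def)
  also have "orient_sign (inv \<alpha> ?w) * orient_cocycle k ?w = orient_cocycle (Suc k) (inv \<alpha> ?w)"
    by (simp add: orient_cocycle_Suc')
  finally show ?case
    by simp
qed simp

text \<open>Only the summand \<open>k = n z\<close> contributes at \<open>\<sigma> z\<close>, because \<open>\<sigma>\<close> is injective.\<close>
lemma sstar_apply:
  assumes \<sigma>: "full_group_cocycle \<alpha> \<sigma> n" and nonneg: "\<And>x. 0 \<le> n x"
  shows "sstar \<alpha> \<phi> n g (\<sigma> z) = orient_cocycle (nat (n z)) z * g z"
proof -
  have "inj \<sigma>" and "n \<in> CZ" and \<sigma>_eq: "\<And>x. \<sigma> x = (\<alpha> ^^ nat (n x)) x"
    using \<sigma> nonneg by (auto simp: full_group_cocycle_def homeomorphic_eq_everything_map zpow_def)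
  have summand: "zpow (astar \<alpha> \<phi>) (astar_inv \<alpha> \<phi>) k (\<lambda>x. g x * indicator (n -` {k}) x) (\<sigma> z)
      = (if k = n z then orient_cocycle (nat (n z)) z * g z else 0)" if "k \<in> range n" for k
  proof -
    define w where "w = (inv \<alpha> ^^ nat k) (\<sigma> z)"
    have "0 \<le> k" using that nonneg by auto
    then have lhs: "zpow (astar \<alpha> \<phi>) (astar_inv \<alpha> \<phi>) k (\<lambda>x. g x * indicator (n -` {k}) x) (\<sigma> z)
        = orient_cocycle (nat k) w * (g w * indicator (n -` {k}) w)"
      by (simp add: zpow_def astar_funpow w_def)
    show ?thesis
    proof (cases "k = n z")
      case True
      then have "w = z" by (simp add: w_def \<sigma>_eq)
      then show ?thesis using lhs True by simp
    next
      case False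
      have "n w \<noteq> k"
      proof
        assume "n w = k"
        then have "\<sigma> w = \<sigma> z" by (simp add: \<sigma>_eq w_def)
        then show False using \<open>inj \<sigma>\<close> \<open>n w = k\<close> False by (simp add: inj_eq)
      qed
      then show ?thesis using lhs False by (simp add: indicator_def)
    qed
  qed
  have "finite (range n)"
    using finite_image_continuous_map_int[OF compact_space_Cantor] \<open>n \<in> CZ\<close> by (simp add: CZ_def)
  then show ?thesis
    by (simp add: sstar_def summand cong: sum.cong)
qed

text \<open>An orientation cocycle \<open>-1\<close> along \<open>n\<close> means that \<open>\<sigma>\<close> reverses the circle fibres over \<open>U\<close>.\<close>
definition reflecting :: "cantor set \<Rightarrow> bool" where
  "reflecting U \<longleftrightarrow> clopenin Cantor U \<and> (\<exists>\<sigma> n. full_group_cocycle \<alpha> \<sigma> n \<and> (\<forall>x. 0 \<le> n x) \<and>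
     (\<forall>x. x \<notin> U \<longrightarrow> \<sigma> x = x \<and> n x = 0) \<and> (\<forall>x\<in>U. \<sigma> x \<in> U \<and> orient_cocycle (nat (n x)) x = -1))"

lemma reflecting_empty: "reflecting {}"
proof -
  have "full_group_cocycle \<alpha> id (\<lambda>x. 0)"
    by (simp add: full_group_cocycle_def CZ_def zpow_def)
  then show ?thesis
    unfolding reflecting_def by (intro conjI clopenin_empty exI[of _ id] exI[of _ "\<lambda>x. 0"]) auto
qed

lemma reflecting_Un:
  assumes "reflecting U1" "reflecting U2" "U1 \<inter> U2 = {}"
  shows "reflecting (U1 \<union> U2)"
proof -
  obtain \<sigma>1 n1 where \<sigma>1: "full_group_cocycle \<alpha> \<sigma>1 n1" "\<forall>x. 0 \<le> n1 x"
      "\<forall>x. x \<notin> U1 \<longrightarrow> \<sigma>1 x = x \<and> n1 x = 0" "\<forall>x\<in>U1. \<sigma>1 x \<in> U1 \<and> orient_cocycle (nat (n1 x)) x = -1"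
    using assms(1) unfolding reflecting_def by blast
  obtain \<sigma>2 n2 where \<sigma>2: "full_group_cocycle \<alpha> \<sigma>2 n2" "\<forall>x. 0 \<le> n2 x"
      "\<forall>x. x \<notin> U2 \<longrightarrow> \<sigma>2 x = x \<and> n2 x = 0" "\<forall>x\<in>U2. \<sigma>2 x \<in> U2 \<and> orient_cocycle (nat (n2 x)) x = -1"
    using assms(2) unfolding reflecting_def by blast
  define n where "n x = n1 x + n2 x" for x
  have on_U2: "\<sigma>1 (\<sigma>2 x) = \<sigma>2 x" "n1 x = 0" if "x \<in> U2" for x
    using that assms(3) \<sigma>1(3) \<sigma>2(4) by auto
  have "homeomorphic_map Cantor Cantor (\<sigma>1 \<circ> \<sigma>2)"
    using \<sigma>1(1) \<sigma>2(1) by (auto simp: full_group_cocycle_def intro: homeomorphic_map_compose)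
  moreover have "n \<in> CZ"
    using \<sigma>1(1) \<sigma>2(1) continuous_map_int_binop[of Cantor n1 n2 "(+)"]
    by (simp add: full_group_cocycle_def CZ_def n_def[abs_def])
  moreover have "(\<sigma>1 \<circ> \<sigma>2) x = zpow \<alpha> (inv \<alpha>) (n x) x" for x
    using \<sigma>1(1,3) \<sigma>2(1,3) on_U2[of x] by (cases "x \<in> U2") (auto simp: full_group_cocycle_def n_def)
  ultimately have "full_group_cocycle \<alpha> (\<sigma>1 \<circ> \<sigma>2) n"
    by (simp add: full_group_cocycle_def)
  moreover have "(\<sigma>1 \<circ> \<sigma>2) x \<in> U1 \<union> U2 \<and> orient_cocycle (nat (n x)) x = -1" if "x \<in> U1 \<union> U2" for x
    using that assms(3) \<sigma>1(3,4) \<sigma>2(3,4) on_U2[of x] by (auto simp: n_def)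
  ultimately show ?thesis
    using assms \<sigma>1(2,3) \<sigma>2(2,3) unfolding reflecting_def
    by (intro conjI exI[of _ "\<sigma>1 \<circ> \<sigma>2"] exI[of _ n]) (auto simp: clopenin_Un n_def)
qed

lemma reflecting_sstar:
  assumes "reflecting U"
  shows "\<exists>\<sigma> n. full_group_cocycle \<alpha> \<sigma> n \<and> (\<forall>x. x \<notin> U \<longrightarrow> \<sigma> x = x) \<and>
           sstar \<alpha> \<phi> n (indicator U) = (\<lambda>x. - indicator U x)"
proof -
  obtain \<sigma> n where \<sigma>: "full_group_cocycle \<alpha> \<sigma> n" "\<forall>x. 0 \<le> n x"
      "\<forall>x. x \<notin> U \<longrightarrow> \<sigma> x = x \<and> n x = 0" "\<forall>x\<in>U. \<sigma> x \<in> U \<and> orient_cocycle (nat (n x)) x = -1"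
    using assms unfolding reflecting_def by blast
  have "homeomorphic_map Cantor Cantor \<sigma>"
    using \<sigma>(1) unfolding full_group_cocycle_def by blast
  then have "surj \<sigma>"
    by (simp add: homeomorphic_eq_everything_map)
  have "sstar \<alpha> \<phi> n (indicator U) (\<sigma> z) = - indicator U (\<sigma> z)" for z
    using sstar_apply[OF \<sigma>(1), of "indicator U" z] \<sigma>(2,3,4) by (cases "z \<in> U") (auto simp: indicator_def)
  then have "sstar \<alpha> \<phi> n (indicator U) y = - indicator U y" for y
    using \<open>surj \<sigma>\<close> by (metis surjD)
  then show ?thesis
    using \<sigma>(1,3) by blast
qed

lemma reflecting_odd_returns:
  assumes "clopenin Cantor U" "U \<noteq> {}" "odd_returns U"
  shows "reflecting U"
  unfolding reflecting_def
proof (intro conjI exI)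
  show "full_group_cocycle \<alpha> (return_map U) (return_time U)"
    by (rule full_group_cocycle_return_map[OF assms(1,2)])
  show "\<forall>x\<in>U. return_map U x \<in> U \<and> orient_cocycle (nat (return_time U x)) x = -1"
    using return_map_in[OF assms(1,2)] assms(3) by (simp add: odd_returns_def return_time_def)
qed (use assms(1) in \<open>auto simp: return_map_def return_time_def\<close>)

definition odd_part :: "cantor set \<Rightarrow> cantor set" where
  "odd_part B = {x \<in> B. orient_cocycle (first_return B x) x = -1}"

context
  fixes B assumes B: "clopenin Cantor B" "B \<noteq> {}"
begin

lemma clopenin_odd_part: "clopenin Cantor (odd_part B)"
proof -
  have "continuous_map Cantor euclidean (\<lambda>x. orient_cocycle (first_return B x) x)"
    using continuous_map_glue_levels[where l = "first_return B" and H = orient_cocycle]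
      openin_first_return_level[OF B] continuous_orient_cocycle
    by simp
  moreover have "clopenin euclidean {-1 :: int}"
    by (simp add: clopenin_def open_discrete)
  ultimately have "clopenin Cantor {x. orient_cocycle (first_return B x) x \<in> {-1}}"
    using clopenin_continuous_map_preimage by fastforce
  then show ?thesis
    using clopenin_Int[OF B(1)] by (simp add: odd_part_def Collect_conj_eq)
qed

text \<open>The return path of a point of \<open>B\<close> to \<open>odd_part B\<close> is a chain of returns to \<open>B\<close>, all but
  the last of which land outside \<open>odd_part B\<close> and so contribute the sign \<open>1\<close>.\<close>
lemma odd_returns_odd_part:
  assumes "odd_part B \<noteq> {}"
  shows "odd_returns (odd_part B)"
proof -
  let ?U = "odd_part B"
  have U: "clopenin Cantor ?U" "?U \<noteq> {}" "?U \<subseteq> B"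
    using clopenin_odd_part assms by (auto simp: odd_part_def)
  have "orient_cocycle (first_return ?U x) x = (if x \<in> ?U then -1 else 1)" if "x \<in> B" for x
    using that
  proof (induction "first_return ?U x" arbitrary: x rule: less_induct)
    case less
    let ?r = "first_return B x" and ?R = "first_return ?U x"
    have sign_r: "orient_cocycle ?r x = (if x \<in> ?U then -1 else 1)"
      using less.prems orient_cocycle_cases[of ?r x] by (auto simp: odd_part_def)
    have "?r \<le> ?R"
      by (rule first_return_mono[OF U(1,2) B(1) U(3)])
    show ?case
    proof (cases "?r = ?R")
      case True
      then show ?thesis using sign_r by simp
    next
      case False
      let ?y = "(\<alpha> ^^ ?r) x"
      have r: "1 \<le> ?r" "?r < ?R"
        using first_return_pos[OF B] \<open>?r \<le> ?R\<close> False by auto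
      have "?y \<in> B" "?y \<notin> ?U"
        using funpow_first_return[OF B] before_first_return[OF U(1,2) r] by auto
      moreover have "first_return ?U ?y = ?R - ?r"
        by (rule first_return_funpow[OF U(1,2) r])
      ultimately have "orient_cocycle (?R - ?r) ?y = 1"
        using less.hyps[of ?y] r by simp
      moreover have "orient_cocycle ?R x = orient_cocycle ?r x * orient_cocycle (?R - ?r) ?y"
        using orient_cocycle_add[of ?r "?R - ?r" x] r by simp
      ultimately show ?thesis using sign_r by simp
    qed
  qed
  then show ?thesis
    using U(3) by (auto simp: odd_returns_def)
qed

end

lemma exists_reflecting_sign:
  assumes V: "clopenin Cantor V" "V \<noteq> {}" and s: "s = 1 \<or> s = -1"
  shows "\<exists>U\<subseteq>V. reflecting U \<and> K1_equiv \<alpha> \<phi> x0 (indicator U) (\<lambda>x. s * hphi \<alpha> \<phi> x)"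
proof -
  obtain p j k where p: "p \<in> V" "(\<alpha> ^^ j) p = x0" "orient_cocycle j p = s" "j < k"
    "(\<alpha> ^^ k) p \<in> V" "orient_cocycle k p = -1"
    using twisted_return_segment[OF V s] by blast
  obtain B where B: "clopenin Cantor B" "B \<subseteq> V" "p \<in> B" "first_return B p = k"
    using clopen_first_return_eq[OF V(1) p(1,5)] p(4) by auto
  let ?U = "odd_part B"
  have "B \<noteq> {}" using B(3) by auto
  have "p \<in> ?U" using B(3,4) p(6) by (simp add: odd_part_def)
  then have U: "clopenin Cantor ?U" "?U \<noteq> {}" "odd_returns ?U"
    using clopenin_odd_part[OF B(1) \<open>B \<noteq> {}\<close>] odd_returns_odd_part[OF B(1) \<open>B \<noteq> {}\<close>] by auto
  have "?U \<subseteq> B" by (auto simp: odd_part_def)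
  then have "j < first_return ?U p"
    using first_return_mono[OF U(1,2) B(1)] B(4) p(4) by (meson order_less_le_trans)
  then have "last_visit ?U x0 = j"
    using last_visit_funpow[OF U(1,2) \<open>p \<in> ?U\<close>] p(2) by blast
  moreover have "(inv \<alpha> ^^ j) x0 = p"
    unfolding p(2)[symmetric] by simp
  ultimately have "last_visit_sign ?U x0 = s"
    using p(3) by (simp add: last_visit_sign_def)
  then have "K1_equiv \<alpha> \<phi> x0 (indicator ?U) (\<lambda>x. s * hphi \<alpha> \<phi> x)"
    using K1_equiv_odd_returns[OF U, of x0] by simp
  moreover have "?U \<subseteq> V" using B(2) \<open>?U \<subseteq> B\<close> by blast
  ultimately show ?thesis
    using reflecting_odd_returns[OF U] by blast
qed

lemma exists_reflecting_multiple:
  assumes s: "s = 1 \<or> s = -1"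
  shows "clopenin Cantor V \<Longrightarrow> V \<noteq> {} \<Longrightarrow>
    \<exists>U\<subseteq>V. reflecting U \<and> K1_equiv \<alpha> \<phi> x0 (indicator U) (\<lambda>x. int n * s * hphi \<alpha> \<phi> x)"
proof (induction n arbitrary: V)
  case 0
  have "indicator {} = (\<lambda>x :: cantor. 0 :: int)"
    by (rule ext) simp
  then have "K1_equiv \<alpha> \<phi> x0 (indicator {}) (\<lambda>x. int 0 * s * hphi \<alpha> \<phi> x)"
    using K1_equiv_refl[of \<alpha> \<phi> x0 "\<lambda>x. 0"] by simp
  then show ?case using reflecting_empty by blast
next
  case (Suc n)
  obtain V1 V2 where V: "clopenin Cantor V1" "clopenin Cantor V2" "V1 \<noteq> {}" "V2 \<noteq> {}"
    "V1 \<inter> V2 = {}" "V1 \<union> V2 \<subseteq> V"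
    using Cantor_clopen_split[OF Suc.prems] by blast
  obtain U1 where U1: "U1 \<subseteq> V1" "reflecting U1"
    "K1_equiv \<alpha> \<phi> x0 (indicator U1) (\<lambda>x. int n * s * hphi \<alpha> \<phi> x)"
    using Suc.IH[OF V(1,3)] by blast
  obtain U2 where U2: "U2 \<subseteq> V2" "reflecting U2" "K1_equiv \<alpha> \<phi> x0 (indicator U2) (\<lambda>x. s * hphi \<alpha> \<phi> x)"
    using exists_reflecting_sign[OF V(2,4) s] by blast
  have disjoint: "U1 \<inter> U2 = {}" using U1(1) U2(1) V(5) by blast
  have "K1_equiv \<alpha> \<phi> x0 (\<lambda>x. indicator U1 x + indicator U2 x)
      (\<lambda>x. int n * s * hphi \<alpha> \<phi> x + s * hphi \<alpha> \<phi> x)"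
    by (rule K1_equiv_add[OF U1(3) U2(3)])
  moreover have "(\<lambda>x. indicator U1 x + indicator U2 x) = (indicator (U1 \<union> U2) :: cantor \<Rightarrow> int)"
    using disjoint by (intro ext) (auto simp: indicator_def)
  moreover have "(\<lambda>x. int n * s * hphi \<alpha> \<phi> x + s * hphi \<alpha> \<phi> x) = (\<lambda>x. int (Suc n) * s * hphi \<alpha> \<phi> x)"
    by (simp add: algebra_simps)
  ultimately show ?case
    using reflecting_Un[OF U1(2) U2(2) disjoint] U1(1) U2(1) V(6) by (metis Un_mono order_trans)
qed

lemma exists_reflecting:
  assumes "clopenin Cantor V" "V \<noteq> {}"
  shows "\<exists>U\<subseteq>V. reflecting U \<and> K1_equiv \<alpha> \<phi> x0 (indicator U) (\<lambda>x. m * hphi \<alpha> \<phi> x)"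
proof (cases "0 \<le> m")
  case True
  then have "m = int (nat m) * 1" by simp
  then show ?thesis using exists_reflecting_multiple[where s = 1 and n = "nat m"] assms by metis
next
  case False
  then have "m = int (nat (- m)) * (- 1)" by simp
  then show ?thesis using exists_reflecting_multiple[where s = "- 1" and n = "nat (- m)"] assms by metis
qed

end

theorem lemma6p3:
  fixes \<alpha> :: "cantor \<Rightarrow> cantor" and \<phi> :: "cantor \<Rightarrow> complex \<Rightarrow> complex"
    and x0 :: cantor and m :: int and V :: "cantor set"
  assumes "minimal_homeo Cantor \<alpha>"
    and "\<forall>x. circle_isom (\<phi> x)"
    and "continuous_map (prod_topology Cantor (top_of_set Circ)) euclidean (\<lambda>(x, t). \<phi> x t)"
    and "minimal_homeo (prod_topology Cantor (top_of_set Circ)) (skew \<alpha> \<phi>)"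
    and "\<not> orientation_preserving \<alpha> \<phi>"
    and "openin Cantor V" and "closedin Cantor V" and "V \<noteq> {}"
  shows "\<exists>U. openin Cantor U \<and> closedin Cantor U \<and> U \<subseteq> V \<and>
           K1_equiv \<alpha> \<phi> x0 (indicator U) (\<lambda>x. m * hphi \<alpha> \<phi> x) \<and>
           (\<exists>\<sigma> n. full_group_cocycle \<alpha> \<sigma> n \<and> (\<forall>x. x \<notin> U \<longrightarrow> \<sigma> x = x) \<and>
              sstar \<alpha> \<phi> n (indicator U) = (\<lambda>x. - indicator U x))"
proof -
  interpret nonorientable_system \<alpha> \<phi>
    by unfold_locales (use assms(1,2,3,5) in simp_all)
  have "clopenin Cantor V"
    using assms(6,7) by (simp add: clopenin_def)
  then obtain U where U: "U \<subseteq> V" "reflecting U" "K1_equiv \<alpha> \<phi> x0 (indicator U) (\<lambda>x. m * hphi \<alpha> \<phi> x)"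
    using exists_reflecting[OF _ assms(8)] by blast
  moreover have "openin Cantor U" "closedin Cantor U"
    using U(2) by (simp_all add: reflecting_def clopenin_def)
  ultimately show ?thesis
    using reflecting_sstar[OF U(2)] by blast
qed

end
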